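(* For $i\in\{1,2\}$, let $L_i$ be a planar semimodular lattice with a fixed planar diagram and let $L_i'$ be the full slimming sublattice of $L_i$ obtained from that diagram. Then: (i) $L_1$ is glued sum indecomposable if and only if $L_1'$ is glued sum indecomposable. (ii) If $\varphi\colon L_1\to L_2$ is a lattice isomorphism, then there is an automorphism $\pi$ of $L_1$ such that $\pi(x)=x$ for every reducible element $x\in L_1$, and the restriction of $\varphi\circ\pi$ to $L_1'$ is a $\nu$-preserving isomorphism from $L_1'$ onto $L_2'$, i.e., $\nu_{L_1,L_1'}=\nu_{L_2,L_2'}\circ(\varphi\circ\pi)|_{L_1'}$. (iii) Any two full slimming sublattices of a planar semimodular lattice (obtained from possibly different planar diagrams) are isomorphic.
   Context: All lattices are finite. A lattice is glued sum indecomposable if it is not a chain and every $x\in L\setminus\{0,1\}$ is incomparable with some element. An element is reducible if it is join-reducible or meet-reducible, i.e., not doubly irreducible. Given a planar diagram of a planar semimodular lattice $L$, an eye is a doubly irreducible element lying in the interior of an interval of length $2$ (strictly inside the region bounded by the leftmost and rightmost maximal chains of that interval). A full slimming sublattice $L'$ of $L$ is obtained by omitting eyes (with their edges) one by one as long as possible; $L'$ is a slim semimodular sublattice containing all reducible elements of $L$, and in it every element has at most two covers, so each $4$-cell (covering square of the diagram) of $L'$ is determined by its bottom. The numerical companion map $\nu_{L,L'}\colon L'\to\{0,1,2,\dots\}$ sends $x$ to $n$ if $x$ is the bottom of a $4$-cell of $L'$ into whose interior $n$ eyes of $L$ were placed, and to $0$ otherwise. An isomorphism $\varphi\colon L_1'\to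 L_2'$ is $\nu$-preserving if $\nu_{L_1,L_1'}=\nu_{L_2,L_2'}\circ\varphi$. *)

theory Defs
  imports "HOL-Analysis.Analysis"
begin

text \<open>A finite lattice is modelled as a type of class finite and lattice;
  sublattices (e.g. the full slimming sublattice) are subsets with the induced order.\<close>

definition covers :: "'a::order \<Rightarrow> 'a \<Rightarrow> bool" where
  "covers x y \<longleftrightarrow> x < y \<and> \<not> (\<exists>z. x < z \<and> z < y)"

definition covers_in :: "'a::order set \<Rightarrow> 'a \<Rightarrow> 'a \<Rightarrow> bool" where
  "covers_in S x y \<longleftrightarrow> x \<in> S \<and> y \<in> S \<and> x < y \<and> \<not> (\<exists>z\<in>S. x < z \<and> z < y)"

definition semimodular :: "'a::lattice itself \<Rightarrow> bool" where
  "semimodular _ \<longleftrightarrow> (\<forall>a b c::'a. covers a b \<longrightarrow>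
      (sup a c = sup b c \<or> covers (sup a c) (sup b c)))"

definition planar_diagram :: "('a::order \<Rightarrow> real \<times> real) \<Rightarrow> bool" where
  "planar_diagram p \<longleftrightarrow> inj p \<and>
     (\<forall>a b. covers a b \<longrightarrow> snd (p a) < snd (p b)) \<and>
     (\<forall>a b v. covers a b \<and> v \<noteq> a \<and> v \<noteq> b \<longrightarrow> p v \<notin> closed_segment (p a) (p b)) \<and>
     (\<forall>a b c d. covers a b \<and> covers c d \<and> (a, b) \<noteq> (c, d) \<longrightarrow>
        closed_segment (p a) (p b) \<inter> closed_segment (p c) (p d) \<subseteq> {p a, p b} \<inter> {p c, p d})"

definition is_lub_in :: "'a::order set \<Rightarrow> 'a \<Rightarrow> 'a \<Rightarrow> 'a \<Rightarrow> bool" where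
  "is_lub_in S y z x \<longleftrightarrow> x \<in> S \<and> y \<le> x \<and> z \<le> x \<and> (\<forall>w\<in>S. y \<le> w \<and> z \<le> w \<longrightarrow> x \<le> w)"

definition is_glb_in :: "'a::order set \<Rightarrow> 'a \<Rightarrow> 'a \<Rightarrow> 'a \<Rightarrow> bool" where
  "is_glb_in S y z x \<longleftrightarrow> x \<in> S \<and> x \<le> y \<and> x \<le> z \<and> (\<forall>w\<in>S. w \<le> y \<and> w \<le> z \<longrightarrow> w \<le> x)"

definition join_reducible_in :: "'a::order set \<Rightarrow> 'a \<Rightarrow> bool" where
  "join_reducible_in S x \<longleftrightarrow> (\<exists>y\<in>S. \<exists>z\<in>S. y < x \<and> z < x \<and> is_lub_in S y z x)"

definition meet_reducible_in :: "'a::order set \<Rightarrow> 'a \<Rightarrow> bool" where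
  "meet_reducible_in S x \<longleftrightarrow> (\<exists>y\<in>S. \<exists>z\<in>S. x < y \<and> x < z \<and> is_glb_in S y z x)"

definition reducible_in :: "'a::order set \<Rightarrow> 'a \<Rightarrow> bool" where
  "reducible_in S x \<longleftrightarrow> join_reducible_in S x \<or> meet_reducible_in S x"

definition doubly_irreducible_in :: "'a::order set \<Rightarrow> 'a \<Rightarrow> bool" where
  "doubly_irreducible_in S x \<longleftrightarrow> \<not> reducible_in S x"

definition length2_in :: "'a::order set \<Rightarrow> 'a \<Rightarrow> 'a \<Rightarrow> bool" where
  "length2_in S a b \<longleftrightarrow> a \<in> S \<and> b \<in> S \<and> a < b \<and> (\<exists>c\<in>S. a < c \<and> c < b) \<and>
     \<not> (\<exists>c\<in>S. \<exists>d\<in>S. a < c \<and> c < d \<and> d < b)"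

text \<open>Left-right position of the edge from a to c (horizontal displacement per unit height);
  smaller means further left.\<close>
definition slope :: "('a \<Rightarrow> real \<times> real) \<Rightarrow> 'a \<Rightarrow> 'a \<Rightarrow> real" where
  "slope p a c = (fst (p c) - fst (p a)) / (snd (p c) - snd (p a))"

text \<open>An eye of the current sublattice S (with the diagram inherited from p): a doubly
  irreducible element of S that is an atom of an interval [a,b] of length 2 of S lying
  strictly between the leftmost and the rightmost maximal chains of [a,b].\<close>
definition eye :: "('a::order \<Rightarrow> real \<times> real) \<Rightarrow> 'a set \<Rightarrow> 'a \<Rightarrow> bool" where
  "eye p S e \<longleftrightarrow> e \<in> S \<and> doubly_irreducible_in S e \<and>
     (\<exists>a\<in>S. \<exists>b\<in>S. length2_in S a b \<and> a < e \<and> e < b \<and>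
        (\<exists>c1\<in>S. \<exists>c2\<in>S. a < c1 \<and> c1 < b \<and> a < c2 \<and> c2 < b \<and>
           slope p a c1 < slope p a e \<and> slope p a e < slope p a c2))"

definition slimming_step :: "('a::order \<Rightarrow> real \<times> real) \<Rightarrow> 'a set \<Rightarrow> 'a set \<Rightarrow> bool" where
  "slimming_step p S T \<longleftrightarrow> (\<exists>e. eye p S e \<and> T = S - {e})"

definition full_slimming :: "('a::order \<Rightarrow> real \<times> real) \<Rightarrow> 'a set \<Rightarrow> bool" where
  "full_slimming p S \<longleftrightarrow> (slimming_step p)\<^sup>*\<^sup>* UNIV S \<and> \<not> (\<exists>e. eye p S e)"

text \<open>Numerical companion map: number of omitted eyes placed into the interior of the
  4-cell of L' whose bottom is x (0 if x is not the bottom of a 4-cell).\<close>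
definition nu :: "'a::order set \<Rightarrow> 'a \<Rightarrow> nat" where
  "nu S x = card {e. e \<notin> S \<and> (\<exists>c1 c2 t. c1 \<noteq> c2 \<and> covers_in S x c1 \<and> covers_in S x c2 \<and>
       covers_in S c1 t \<and> covers_in S c2 t \<and> x < e \<and> e < t)}"

definition glued_sum_indecomposable_in :: "'a::order set \<Rightarrow> bool" where
  "glued_sum_indecomposable_in S \<longleftrightarrow>
     \<not> (\<forall>x\<in>S. \<forall>y\<in>S. x \<le> y \<or> y \<le> x) \<and>
     (\<forall>x\<in>S. (\<exists>y\<in>S. y < x) \<and> (\<exists>y\<in>S. x < y) \<longrightarrow> (\<exists>y\<in>S. \<not> x \<le> y \<and> \<not> y \<le> x))"

definition lattice_iso :: "('a::lattice \<Rightarrow> 'b::lattice) \<Rightarrow> bool" where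
  "lattice_iso f \<longleftrightarrow> bij f \<and> (\<forall>x y. f (sup x y) = sup (f x) (f y) \<and> f (inf x y) = inf (f x) (f y))"

definition lattice_iso_on :: "('a::lattice \<Rightarrow> 'b::lattice) \<Rightarrow> 'a set \<Rightarrow> 'b set \<Rightarrow> bool" where
  "lattice_iso_on f S T \<longleftrightarrow> bij_betw f S T \<and>
     (\<forall>x\<in>S. \<forall>y\<in>S. f (sup x y) = sup (f x) (f y) \<and> f (inf x y) = inf (f x) (f y))"

end

theory Submission
  imports Defs
begin

text \<open>Omitting an eye \<open>e\<close> only ever removes an element with a unique lower cover \<open>a\<close> and a
  unique upper cover \<open>b\<close> lying in a covering square \<open>a < c1, c2 < b\<close> of the current
  sublattice, and this situation persists: a slimming sublattice is a cover-preserving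
  sublattice, and every omitted element is a doubly irreducible twin of an atom of a 4-cell
  of it. Conversely, by planarity an atom of \<open>[a, b]\<close> whose edge from \<open>a\<close> lies strictly
  between two other such edges cannot leave the quadrangle \<open>a c1 b c2\<close> except through a
  corner, so its only covers are \<open>a\<close> and \<open>b\<close> and it is an eye. Hence a full slimming keeps
  exactly \<open>min k 2\<close> of the \<open>k\<close> atoms of every covering interval, a number preserved by
  isomorphisms. Counting twin classes then yields a permutation of twins, automatically an
  automorphism fixing all reducible elements, that carries the omitted elements of \<open>L\<^sub>1\<close>
  onto the preimages of those of \<open>L\<^sub>2\<close>. Glued sum indecomposability is unaffected since
  each omitted element is incomparable to an atom of its 4-cell.\<close>

section \<open>Cells of a planar diagram\<close>

definition line_abscissa :: "real \<times> real \<Rightarrow> real \<times> real \<Rightarrow> real \<Rightarrow> real" where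
  "line_abscissa P Q y = fst P + (y - snd P) * (fst Q - fst P) / (snd Q - snd P)"

lemma closed_segment_line_abscissa:
  assumes "snd P < snd Q" "w \<in> closed_segment P Q"
  shows "snd P \<le> snd w \<and> snd w \<le> snd Q \<and> fst w = line_abscissa P Q (snd w)"
proof -
  obtain u where u: "0 \<le> u" "u \<le> 1" "w = (1 - u) *\<^sub>R P + u *\<^sub>R Q"
    using assms(2) by (auto simp: in_segment)
  have s: "snd w = snd P + u * (snd Q - snd P)" "fst w = fst P + u * (fst Q - fst P)"
    unfolding u(3) by (simp_all add: algebra_simps)
  have "snd w \<le> snd Q"
    using s u assms(1) by (smt (verit) mult_left_le_one_le)
  moreover have "fst w = line_abscissa P Q (snd w)"
    using assms(1) unfolding line_abscissa_def s by (simp add: field_simps)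
  ultimately show ?thesis using s u assms(1) by simp
qed

lemma line_abscissa_in_closed_segment:
  assumes "snd P < snd Q" "snd P \<le> y" "y \<le> snd Q"
  shows "(line_abscissa P Q y, y) \<in> closed_segment P Q"
proof -
  define u where "u = (y - snd P) / (snd Q - snd P)"
  have u: "0 \<le> u" "u \<le> 1" using assms by (auto simp: u_def field_simps)
  have "fst ((1 - u) *\<^sub>R P + u *\<^sub>R Q) = fst P + u * (fst Q - fst P)"
    "snd ((1 - u) *\<^sub>R P + u *\<^sub>R Q) = snd P + u * (snd Q - snd P)"
    by (simp_all add: algebra_simps)
  moreover have "line_abscissa P Q y = fst P + u * (fst Q - fst P)" "u * (snd Q - snd P) = y - snd P"
    using assms(1) by (simp_all add: line_abscissa_def u_def)
  ultimately have "(line_abscissa P Q y, y) = (1 - u) *\<^sub>R P + u *\<^sub>R Q"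
    by (simp add: prod_eq_iff)
  then show ?thesis using u by (auto simp: in_segment)
qed

lemma line_abscissa_endpoints:
  assumes "snd P \<noteq> snd Q"
  shows "line_abscissa P Q (snd P) = fst P" "line_abscissa P Q (snd Q) = fst Q"
  using assms by (auto simp: line_abscissa_def field_simps)

lemma continuous_on_line_abscissa: "continuous_on UNIV (line_abscissa P Q)"
proof -
  have "line_abscissa P Q = (\<lambda>y. fst P + (y - snd P) * ((fst Q - fst P) / (snd Q - snd P)))"
    by (rule ext) (simp add: line_abscissa_def)
  then show ?thesis by (simp only:) (intro continuous_intros)
qed

definition path_abscissa :: "real \<times> real \<Rightarrow> real \<times> real \<Rightarrow> real \<times> real \<Rightarrow> real \<Rightarrow> real" where
  "path_abscissa A C B y = (if y \<le> snd C then line_abscissa A C y else line_abscissa C B y)"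

lemma path_abscissa_endpoints:
  assumes "snd A < snd C" "snd C < snd B"
  shows "path_abscissa A C B (snd A) = fst A" "path_abscissa A C B (snd B) = fst B"
  using assms line_abscissa_endpoints[of A C] line_abscissa_endpoints[of C B]
  unfolding path_abscissa_def by auto

lemma continuous_on_path_abscissa:
  assumes "snd A < snd C" "snd C < snd B"
  shows "continuous_on UNIV (path_abscissa A C B)"
proof -
  have "continuous_on ({..snd C} \<union> {snd C..})
      (\<lambda>y. if y \<le> snd C then line_abscissa A C y else line_abscissa C B y)"
    using assms by (intro continuous_on_cases continuous_on_subset[OF continuous_on_line_abscissa])
      (auto simp: line_abscissa_endpoints)
  moreover have "{..snd C} \<union> {snd C..} = UNIV" by auto
  ultimately show ?thesis unfolding path_abscissa_def[abs_def] by simp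
qed

lemma closed_segment_path_abscissa:
  assumes "snd A < snd C" "snd C < snd B" "w \<in> closed_segment A C \<union> closed_segment C B"
  shows "snd A \<le> snd w \<and> snd w \<le> snd B \<and> fst w = path_abscissa A C B (snd w)"
  using assms(3)
proof
  assume "w \<in> closed_segment A C"
  from closed_segment_line_abscissa[OF assms(1) this] show ?thesis
    using assms(2) by (simp add: path_abscissa_def)
next
  assume "w \<in> closed_segment C B"
  then have w: "snd C \<le> snd w" "snd w \<le> snd B" "fst w = line_abscissa C B (snd w)"
    using closed_segment_line_abscissa[OF assms(2)] by auto
  show ?thesis
  proof (cases "snd w = snd C")
    case True
    then show ?thesis using w assms
      line_abscissa_endpoints[of A C] line_abscissa_endpoints[of C B] by (simp add: path_abscissa_def)
  qed (use w assms in \<open>auto simp: path_abscissa_def\<close>)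
qed

lemma path_abscissa_in_path:
  assumes "snd A < snd C" "snd C < snd B" "snd A \<le> y" "y \<le> snd B"
  shows "(path_abscissa A C B y, y) \<in> closed_segment A C \<union> closed_segment C B"
  using assms line_abscissa_in_closed_segment[of A C y] line_abscissa_in_closed_segment[of C B y]
  unfolding path_abscissa_def by (cases "y \<le> snd C") auto

text \<open>For a quadrangle with lowest vertex \<open>A\<close>, highest vertex \<open>B\<close> and side vertices \<open>C1\<close>,
  \<open>C2\<close>, each horizontal line strictly between \<open>A\<close> and \<open>B\<close> meets each side path once, so
  the interior is described row by row as the points strictly between the two side paths.\<close>

definition cell_interior ::
    "real \<times> real \<Rightarrow> real \<times> real \<Rightarrow> real \<times> real \<Rightarrow> real \<times> real \<Rightarrow> (real \<times> real) set" where
  "cell_interior A C1 B C2 = {w. snd A < snd w \<and> snd w < snd B \<and>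
     path_abscissa A C1 B (snd w) < fst w \<and> fst w < path_abscissa A C2 B (snd w)}"

definition cell_boundary ::
    "real \<times> real \<Rightarrow> real \<times> real \<Rightarrow> real \<times> real \<Rightarrow> real \<times> real \<Rightarrow> (real \<times> real) set" where
  "cell_boundary A C1 B C2 =
     closed_segment A C1 \<union> closed_segment C1 B \<union> closed_segment A C2 \<union> closed_segment C2 B"

locale quadrangle =
  fixes A C1 B C2 :: "real \<times> real"
  assumes A_C1: "snd A < snd C1" and C1_B: "snd C1 < snd B"
    and A_C2: "snd A < snd C2" and C2_B: "snd C2 < snd B"
begin

lemma boundary_not_interior:
  assumes "w \<in> cell_boundary A C1 B C2"
  shows "w \<notin> cell_interior A C1 B C2"
proof -
  have "fst w = path_abscissa A C1 B (snd w) \<or> fst w = path_abscissa A C2 B (snd w)"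
    using assms closed_segment_path_abscissa[OF A_C1 C1_B, of w]
      closed_segment_path_abscissa[OF A_C2 C2_B, of w]
    unfolding cell_boundary_def by blast
  then show ?thesis unfolding cell_interior_def by auto
qed

lemma boundary_if_between_paths:
  assumes "snd A \<le> snd w" "snd w \<le> snd B"
    "path_abscissa A C1 B (snd w) \<le> fst w" "fst w \<le> path_abscissa A C2 B (snd w)"
    "w \<notin> cell_interior A C1 B C2"
  shows "w \<in> cell_boundary A C1 B C2"
proof -
  consider "snd w = snd A" | "snd w = snd B"
    | "fst w = path_abscissa A C1 B (snd w)" | "fst w = path_abscissa A C2 B (snd w)"
    using assms unfolding cell_interior_def by force
  then show ?thesis
  proof cases
    case 1
    then have "w = A"
      using assms(3,4) path_abscissa_endpoints[OF A_C1 C1_B] path_abscissa_endpoints[OF A_C2 C2_B]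
      by (simp add: prod_eq_iff)
    then show ?thesis by (simp add: cell_boundary_def)
  next
    case 2
    then have "w = B"
      using assms(3,4) path_abscissa_endpoints[OF A_C1 C1_B] path_abscissa_endpoints[OF A_C2 C2_B]
      by (simp add: prod_eq_iff)
    then show ?thesis by (simp add: cell_boundary_def)
  next
    case 3
    then have "w = (path_abscissa A C1 B (snd w), snd w)" by (simp add: prod_eq_iff)
    then show ?thesis
      using path_abscissa_in_path[OF A_C1 C1_B assms(1,2)] unfolding cell_boundary_def by (metis UnE UnI1 UnI2)
  next
    case 4
    then have "w = (path_abscissa A C2 B (snd w), snd w)" by (simp add: prod_eq_iff)
    then show ?thesis
      using path_abscissa_in_path[OF A_C2 C2_B assms(1,2)] unfolding cell_boundary_def by (metis UnE UnI1 UnI2)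
  qed
qed

lemma segment_meets_boundary:
  assumes "z \<in> cell_interior A C1 B C2" "Q \<notin> cell_interior A C1 B C2"
  shows "\<exists>w\<in>closed_segment z Q. w \<in> cell_boundary A C1 B C2"
proof (rule ccontr)
  assume avoids: "\<not> ?thesis"
  define closed_cell where "closed_cell = {w. snd A \<le> snd w \<and> snd w \<le> snd B \<and>
    path_abscissa A C1 B (snd w) \<le> fst w \<and> fst w \<le> path_abscissa A C2 B (snd w)}"
  have cont: "continuous_on UNIV (\<lambda>w::real \<times> real. path_abscissa A C1 B (snd w))"
    "continuous_on UNIV (\<lambda>w::real \<times> real. path_abscissa A C2 B (snd w))"
    by (auto intro!: continuous_on_compose2[OF continuous_on_path_abscissa continuous_on_snd]
        A_C1 C1_B A_C2 C2_B continuous_on_id)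
  have "open (cell_interior A C1 B C2)"
    unfolding cell_interior_def Collect_conj_eq
    by (intro open_Int open_Collect_less cont continuous_intros)
  moreover have "open (- closed_cell)"
    unfolding closed_cell_def Collect_conj_eq open_Compl
    by (intro closed_Int closed_Collect_le cont continuous_intros)
  moreover have "cell_interior A C1 B C2 \<inter> - closed_cell \<inter> closed_segment z Q = {}"
    unfolding cell_interior_def closed_cell_def by auto
  moreover have "closed_segment z Q \<subseteq> cell_interior A C1 B C2 \<union> - closed_cell"
    using avoids boundary_if_between_paths unfolding closed_cell_def by blast
  ultimately have "cell_interior A C1 B C2 \<inter> closed_segment z Q = {} \<or> - closed_cell \<inter> closed_segment z Q = {}"
    by (rule connectedD[OF connected_segment])
  moreover have "Q \<in> - closed_cell"
    using boundary_if_between_paths[of Q] avoids assms(2) unfolding closed_cell_def by auto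
  ultimately show False using assms(1) by auto
qed

end

section \<open>Covers, covering squares and semimodularity\<close>

lemma covers_in_UNIV [simp]: "covers_in UNIV x y \<longleftrightarrow> covers x y"
  by (simp add: covers_in_def covers_def)

lemma covers_imp_less: "covers x y \<Longrightarrow> x < y"
  by (simp add: covers_def)

lemma ex_covers_in_above:
  fixes x y :: "'a::{finite,order}"
  assumes "x \<in> S" "y \<in> S" "x < y"
  obtains m where "covers_in S x m" "m \<le> y"
proof -
  have "finite {z\<in>S. x < z \<and> z \<le> y}" "y \<in> {z\<in>S. x < z \<and> z \<le> y}" using assms by auto
  from finite_has_minimal2[OF this] obtain m where m: "m \<in> S" "x < m" "m \<le> y"
    "\<forall>z\<in>{z\<in>S. x < z \<and> z \<le> y}. z \<le> m \<longrightarrow> m = z" by blast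
  have "\<not> (\<exists>z\<in>S. x < z \<and> z < m)"
  proof
    assume "\<exists>z\<in>S. x < z \<and> z < m"
    then obtain z where "z \<in> S" "x < z" "z < m" by blast
    then show False using m by force
  qed
  then show thesis using that m assms(1) unfolding covers_in_def by blast
qed

lemma ex_covers_in_below:
  fixes x y :: "'a::{finite,order}"
  assumes "x \<in> S" "y \<in> S" "x < y"
  obtains m where "x \<le> m" "covers_in S m y"
proof -
  have "finite {z\<in>S. x \<le> z \<and> z < y}" "x \<in> {z\<in>S. x \<le> z \<and> z < y}" using assms by auto
  from finite_has_maximal2[OF this] obtain m where m: "m \<in> S" "x \<le> m" "m < y"
    "\<forall>z\<in>{z\<in>S. x \<le> z \<and> z < y}. m \<le> z \<longrightarrow> m = z" by blast
  have "\<not> (\<exists>z\<in>S. m < z \<and> z < y)"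
  proof
    assume "\<exists>z\<in>S. m < z \<and> z < y"
    then obtain z where "z \<in> S" "m < z" "z < y" by blast
    then show False using m by force
  qed
  then show thesis using that m assms(2) unfolding covers_in_def by blast
qed

lemma ex_cover_above:
  fixes x y :: "'a::{finite,order}"
  assumes "x < y"
  obtains z where "covers x z" "z \<le> y"
  using ex_covers_in_above[of x UNIV y] assms by auto

lemma ex_cover_below:
  fixes x y :: "'a::{finite,order}"
  assumes "x < y"
  obtains z where "x \<le> z" "covers z y"
  using ex_covers_in_below[of x UNIV y] assms by auto

lemma wfp_less_finite: "wfp ((<) :: 'a::{finite,order} \<Rightarrow> 'a \<Rightarrow> bool)"
  using strict_partial_order_wfp_on_finite_set[of UNIV "(<) :: 'a \<Rightarrow> 'a \<Rightarrow> bool"]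
  by (auto simp: transp_on_def asymp_on_def intro: order.strict_trans dest: order.asym)

lemma wfp_greater_finite: "wfp ((>) :: 'a::{finite,order} \<Rightarrow> 'a \<Rightarrow> bool)"
  using strict_partial_order_wfp_on_finite_set[of UNIV "(>) :: 'a \<Rightarrow> 'a \<Rightarrow> bool"]
  by (auto simp: transp_on_def asymp_on_def intro: order.strict_trans dest: order.asym)

definition covering_square :: "'a::order \<Rightarrow> 'a \<Rightarrow> 'a \<Rightarrow> 'a \<Rightarrow> bool" where
  "covering_square a c1 c2 b \<longleftrightarrow> c1 \<noteq> c2 \<and> covers a c1 \<and> covers c1 b \<and> covers a c2 \<and> covers c2 b"

lemma upper_covers_incomparable:
  assumes "covers a c1" "covers a c2" "c1 \<noteq> c2"
  shows "\<not> c1 \<le> c2"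
  using assms unfolding covers_def by (metis order.not_eq_order_implies_strict)

lemma
  fixes a :: "'a::lattice"
  assumes "covering_square a c1 c2 b"
  shows covering_square_inf: "inf c1 c2 = a" and covering_square_sup: "sup c1 c2 = b"
proof -
  have covers: "covers a c1" "covers c1 b" "covers a c2" "covers c2 b" "c1 \<noteq> c2"
    using assms by (simp_all add: covering_square_def)
  have "\<not> c1 \<le> c2" "\<not> c2 \<le> c1"
    using upper_covers_incomparable covers by metis+
  then have "inf c1 c2 < c1" "c1 < sup c1 c2"
    by (simp_all add: less_le) (metis inf_le2, metis sup_ge2)
  moreover have "a \<le> inf c1 c2" "sup c1 c2 \<le> b"
    using covers by (simp_all add: covers_def less_imp_le)
  ultimately show "inf c1 c2 = a" "sup c1 c2 = b"
    using covers(1,2) unfolding covers_def by (simp_all add: le_less) blast+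
qed

definition unique_covers :: "'a::order \<Rightarrow> 'a \<Rightarrow> 'a \<Rightarrow> bool" where
  "unique_covers r a b \<longleftrightarrow> (\<forall>z. covers z r \<longleftrightarrow> z = a) \<and> (\<forall>z. covers r z \<longleftrightarrow> z = b)"

lemma unique_covers_covers: "unique_covers r a b \<Longrightarrow> covers a r \<and> covers r b"
  by (simp add: unique_covers_def)

lemma unique_covers_determined:
  assumes "unique_covers r a b" "unique_covers r a' b'"
  shows "a = a' \<and> b = b'"
proof -
  have "covers a r" "covers r b" using assms(1) by (simp_all add: unique_covers_def)
  then show ?thesis using assms(2) by (simp add: unique_covers_def)
qed

lemma
  fixes r :: "'a::{finite,order}"
  assumes "unique_covers r a b" "z \<noteq> r"
  shows unique_covers_ge_iff: "r \<le> z \<longleftrightarrow> b \<le> z"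
    and unique_covers_le_iff: "z \<le> r \<longleftrightarrow> z \<le> a"
proof -
  have "a < r" "r < b" using unique_covers_covers[OF assms(1)] by (auto simp: covers_def)
  moreover have "b \<le> z" if "r < z"
    using ex_cover_above[OF that] assms(1) by (metis unique_covers_def)
  moreover have "z \<le> a" if "z < r"
    using ex_cover_below[OF that] assms(1) by (metis unique_covers_def)
  ultimately show "r \<le> z \<longleftrightarrow> b \<le> z" "z \<le> r \<longleftrightarrow> z \<le> a"
    using assms(2) by (auto simp: order.strict_iff_order)
qed

lemma unique_covers_not_reducible_in:
  fixes r :: "'a::{finite,order}"
  assumes "unique_covers r a b" "a \<in> S" "b \<in> S"
  shows "\<not> reducible_in S r"
proof -
  have "a < r" "r < b" using unique_covers_covers[OF assms(1)] by (auto simp: covers_def)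
  have below: "y \<le> a" if "y < r" for y
    using unique_covers_le_iff[OF assms(1), of y] that by (metis less_imp_le order.strict_implies_not_eq)
  have above: "b \<le> y" if "r < y" for y
    using unique_covers_ge_iff[OF assms(1), of y] that by (metis less_imp_le order.strict_implies_not_eq)
  have "\<not> join_reducible_in S r"
  proof
    assume "join_reducible_in S r"
    then obtain y z where "y < r" "z < r" "is_lub_in S y z r" unfolding join_reducible_in_def by blast
    then have "r \<le> a" using below assms(2) unfolding is_lub_in_def by blast
    with \<open>a < r\<close> show False by simp
  qed
  moreover have "\<not> meet_reducible_in S r"
  proof
    assume "meet_reducible_in S r"
    then obtain y z where "r < y" "r < z" "is_glb_in S y z r" unfolding meet_reducible_in_def by blast
    then have "b \<le> r" using above assms(3) unfolding is_glb_in_def by blast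
    with \<open>r < b\<close> show False by simp
  qed
  ultimately show ?thesis unfolding reducible_in_def by blast
qed

lemma semimodular_covers_completion:
  fixes a :: "'a::lattice"
  assumes "semimodular TYPE('a)" "covers a c" "covers c b" "covers a c'" "c' \<noteq> c" "c' \<le> b"
  shows "covers c' b"
proof -
  have "\<not> c' \<le> c" using upper_covers_incomparable assms(2,4,5) by blast
  then have "c < sup c c'" by (simp add: less_le) (metis sup_ge2)
  moreover have "sup c c' \<le> b" using assms(3,6) by (simp add: covers_def less_imp_le)
  ultimately have "sup c c' = b" using assms(3) unfolding covers_def by (simp add: le_less)
  moreover have "sup a c' = c'" using covers_imp_less[OF assms(4)] by (simp add: sup_absorb2 less_imp_le)
  ultimately have "c' = b \<or> covers c' b" using assms(1,2) unfolding semimodular_def by metis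
  moreover have "c' \<noteq> b" using assms(2,3,4) unfolding covers_def by blast
  ultimately show ?thesis by blast
qed

lemma semimodular_square_no_chain:
  fixes a :: "'a::{finite,lattice}"
  assumes "semimodular TYPE('a)" "covering_square a c1 c2 b"
  shows "\<not> (a < c \<and> c < d \<and> d < b)"
proof
  assume chain: "a < c \<and> c < d \<and> d < b"
  then obtain c' where c': "covers a c'" "c' \<le> c" using ex_cover_above by blast
  obtain ci where "ci \<in> {c1, c2}" "ci \<noteq> c'" using assms(2) by (auto simp: covering_square_def)
  then have "covers a ci" "covers ci b" using assms(2) by (auto simp: covering_square_def)
  then have "covers c' b"
    using semimodular_covers_completion[OF assms(1) _ _ c'(1) \<open>ci \<noteq> c'\<close>[symmetric]] c'(2) chain
    by (meson less_imp_le order.trans)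
  then show False using c'(2) chain unfolding covers_def by (meson order.strict_trans1)
qed

section \<open>Planar diagrams\<close>

lemma
  assumes "planar_diagram p"
  shows planar_diagram_inj: "inj p"
    and planar_diagram_covers_snd_less: "covers a b \<Longrightarrow> snd (p a) < snd (p b)"
    and planar_diagram_vertex_not_on_edge:
      "covers a b \<Longrightarrow> v \<noteq> a \<Longrightarrow> v \<noteq> b \<Longrightarrow> p v \<notin> closed_segment (p a) (p b)"
    and planar_diagram_edges_cross_at_ends:
      "covers a b \<Longrightarrow> covers c d \<Longrightarrow> (a, b) \<noteq> (c, d) \<Longrightarrow>
         closed_segment (p a) (p b) \<inter> closed_segment (p c) (p d) \<subseteq> {p a, p b} \<inter> {p c, p d}"
  using assms unfolding planar_diagram_def by simp_all

lemma planar_diagram_snd_less: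
  fixes p :: "'a::{finite,order} \<Rightarrow> real \<times> real"
  assumes "planar_diagram p" "x < y"
  shows "snd (p x) < snd (p y)"
  using assms(2)
proof (induction y rule: wfp_induct_rule[OF wfp_less_finite])
  case (1 y)
  obtain z where z: "x \<le> z" "covers z y" using ex_cover_below[OF "1.prems"] .
  have "snd (p z) < snd (p y)" using planar_diagram_covers_snd_less[OF assms(1) z(2)] .
  moreover have "snd (p x) \<le> snd (p z)"
  proof (cases "x = z")
    case False
    then show ?thesis using "1.IH"[of z] z covers_imp_less by fastforce
  qed simp
  ultimately show ?case by linarith
qed

lemma planar_diagram_edges_meet:
  assumes "planar_diagram p" "covers u v \<or> covers v u" "covers c d"
    "w \<in> closed_segment (p u) (p v)" "w \<in> closed_segment (p c) (p d)" "u \<noteq> c" "u \<noteq> d"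
  shows "w \<in> {p u, p v} \<inter> {p c, p d}"
  using assms(2)
proof
  assume "covers u v"
  then show ?thesis
    using planar_diagram_edges_cross_at_ends[OF assms(1) _ assms(3), of u v] assms(4-6) by blast
next
  assume "covers v u"
  then show ?thesis
    using planar_diagram_edges_cross_at_ends[OF assms(1) _ assms(3), of v u] assms(4-7)
    by (auto simp: closed_segment_commute)
qed

lemma same_slope_in_closed_segment:
  fixes A P Q :: "real \<times> real"
  assumes "snd A < snd P" "snd P \<le> snd Q"
    and "(fst P - fst A) / (snd P - snd A) = (fst Q - fst A) / (snd Q - snd A)"
  shows "P \<in> closed_segment A Q"
proof -
  have "line_abscissa A Q (snd P) = fst P"
    using assms unfolding line_abscissa_def by (simp add: field_simps)
  then show ?thesis
    using line_abscissa_in_closed_segment[of A Q "snd P"] assms(1,2) by (simp add: prod_eq_iff)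
qed

lemma planar_diagram_slope_neq:
  assumes "planar_diagram p" "covers a c" "covers a c'" "c \<noteq> c'"
  shows "slope p a c \<noteq> slope p a c'"
proof
  assume same: "slope p a c = slope p a c'"
  have "snd (p a) < snd (p c)" "snd (p a) < snd (p c')"
    using assms(2,3) by (auto intro: planar_diagram_covers_snd_less[OF assms(1)])
  then have "p c \<in> closed_segment (p a) (p c') \<or> p c' \<in> closed_segment (p a) (p c)"
    using same same_slope_in_closed_segment[of "p a" "p c" "p c'"]
      same_slope_in_closed_segment[of "p a" "p c'" "p c"] unfolding slope_def by linarith
  moreover have "c \<noteq> a" "c' \<noteq> a" using assms(2,3) by (auto simp: covers_def)
  ultimately show False
    using planar_diagram_vertex_not_on_edge[OF assms(1)] assms(2-4) by blast
qed

locale planar_cell =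
  fixes p :: "'a::{finite,lattice} \<Rightarrow> real \<times> real" and a c1 e c2 b :: 'a
  assumes planar: "planar_diagram p"
    and square: "covering_square a c1 c2 b"
    and a_e: "covers a e" and e_b: "covers e b"
    and slope_c1_e: "slope p a c1 < slope p a e" and slope_e_c2: "slope p a e < slope p a c2"
begin

lemma square_covers: "covers a c1" "covers c1 b" "covers a c2" "covers c2 b"
  using square by (simp_all add: covering_square_def)

lemma heights:
  "snd (p a) < snd (p c1)" "snd (p c1) < snd (p b)" "snd (p a) < snd (p c2)" "snd (p c2) < snd (p b)"
  "snd (p a) < snd (p e)" "snd (p e) < snd (p b)"
  using square_covers a_e e_b by (auto intro: planar_diagram_covers_snd_less[OF planar])

sublocale quadrangle "p a" "p c1" "p b" "p c2"
  using heights by unfold_locales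

abbreviation cell where "cell \<equiv> cell_interior (p a) (p c1) (p b) (p c2)"

lemma middle_not_corner: "e \<notin> {a, c1, c2, b}"
  using a_e e_b slope_c1_e slope_e_c2 by (auto simp: covers_def)

lemma corner_not_in_cell:
  assumes "v \<in> {a, c1, c2, b}"
  shows "p v \<notin> cell"
proof -
  have "p v \<in> cell_boundary (p a) (p c1) (p b) (p c2)"
    using assms by (auto simp: cell_boundary_def)
  then show ?thesis by (rule boundary_not_interior)
qed

lemma edge_leaving_cell:
  assumes "covers u v \<or> covers v u" "p u \<in> cell" "p v \<notin> cell"
  shows "v \<in> {a, c1, c2, b}"
proof -
  obtain w where w: "w \<in> closed_segment (p u) (p v)" "w \<in> cell_boundary (p a) (p c1) (p b) (p c2)"
    using segment_meets_boundary[OF assms(2,3)] by blast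
  have "w \<noteq> p u" using boundary_not_interior[OF w(2)] assms(2) by auto
  have "u \<notin> {a, c1, c2, b}" using corner_not_in_cell assms(2) by blast
  obtain c d where cd: "covers c d" "c \<in> {a, c1, c2, b}" "d \<in> {a, c1, c2, b}"
    "w \<in> closed_segment (p c) (p d)"
    using w(2) square_covers unfolding cell_boundary_def by blast
  have "w \<in> {p u, p v} \<inter> {p c, p d}"
    using planar_diagram_edges_meet[OF planar assms(1) cd(1) w(1) cd(4)] \<open>u \<notin> _\<close> cd(2,3) by auto
  then have "v \<in> {c, d}"
    using \<open>w \<noteq> p u\<close> planar_diagram_inj[OF planar] by (auto dest: injD)
  then show ?thesis using cd by auto
qed

text \<open>Points of the edge from \<open>a\<close> to \<open>e\<close> lower than \<open>c1\<close> and \<open>c2\<close> lie in the cell because the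
  slope of that edge is strictly between the slopes of the edges from \<open>a\<close> to \<open>c1\<close> and \<open>c2\<close>.\<close>

lemma middle_edge_enters_cell:
  obtains z where "z \<in> closed_segment (p a) (p e)" "snd (p a) < snd z" "snd z < snd (p e)"
    "z \<in> cell"
proof -
  define h where "h = min (snd (p c1)) (snd (p c2)) - snd (p a)"
  define D where "D = snd (p e) - snd (p a)"
  have "h > 0" "D > 0" using heights by (simp_all add: h_def D_def)
  define t where "t = h / (h + D)"
  have t: "0 < t" "t < 1" "t * D < h" using \<open>h > 0\<close> \<open>D > 0\<close> by (auto simp: t_def field_simps)
  then have tD: "0 < t * D" "t * D < D" using \<open>D > 0\<close> by simp_all
  define z where "z = (1 - t) *\<^sub>R p a + t *\<^sub>R p e"
  have snd_z: "snd z = snd (p a) + t * D" by (simp add: z_def D_def algebra_simps)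
  have "fst z = fst (p a) + t * (fst (p e) - fst (p a))" by (simp add: z_def algebra_simps)
  then have fst_z: "fst z = fst (p a) + t * D * slope p a e"
    using \<open>D > 0\<close> by (simp add: slope_def D_def)
  have below: "snd z \<le> snd (p c1)" "snd z \<le> snd (p c2)" using snd_z t by (auto simp: h_def)
  then have "snd z < snd (p b)" using heights by linarith
  moreover from below have "path_abscissa (p a) (p c1) (p b) (snd z) = fst (p a) + t * D * slope p a c1"
    "path_abscissa (p a) (p c2) (p b) (snd z) = fst (p a) + t * D * slope p a c2"
    using snd_z by (simp_all add: path_abscissa_def line_abscissa_def slope_def)
  ultimately have "z \<in> cell"
    unfolding cell_interior_def using snd_z fst_z tD
      mult_strict_left_mono[OF slope_c1_e \<open>0 < t * D\<close>] mult_strict_left_mono[OF slope_e_c2 \<open>0 < t * D\<close>]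
    by auto
  moreover have "z \<in> closed_segment (p a) (p e)"
    unfolding in_segment z_def using t by (intro exI[of _ t]) auto
  moreover have "snd (p a) < snd z" "snd z < snd (p e)" using snd_z tD by (simp_all add: D_def)
  ultimately show thesis using that by blast
qed

lemma middle_in_cell: "p e \<in> cell"
proof (rule ccontr)
  assume outside: "p e \<notin> cell"
  obtain z where z: "z \<in> closed_segment (p a) (p e)" "snd (p a) < snd z" "snd z < snd (p e)" "z \<in> cell"
    by (rule middle_edge_enters_cell)
  obtain w where w: "w \<in> closed_segment z (p e)" "w \<in> cell_boundary (p a) (p c1) (p b) (p c2)"
    using segment_meets_boundary[OF z(4) outside] by blast
  have "closed_segment z (p e) \<subseteq> closed_segment (p a) (p e)"
    by (rule closed_segment_subset) (use z(1) in auto)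
  then have w_edge: "w \<in> closed_segment (p e) (p a)"
    using w(1) by (auto simp: closed_segment_commute)
  have "w \<noteq> p a" using closed_segment_line_abscissa[OF z(3) w(1)] z(2) by auto
  obtain c d where cd: "covers c d" "c \<in> {a, c1, c2, b}" "d \<in> {a, c1, c2, b}"
    "w \<in> closed_segment (p c) (p d)"
    using w(2) square_covers unfolding cell_boundary_def by blast
  have "w \<in> {p e, p a} \<inter> {p c, p d}"
    using planar_diagram_edges_meet[OF planar _ cd(1) w_edge cd(4)] a_e middle_not_corner cd(2,3) by auto
  then have "e \<in> {c, d}"
    using \<open>w \<noteq> p a\<close> planar_diagram_inj[OF planar] by (auto dest: injD)
  then show False using cd middle_not_corner by auto
qed

lemma above_middle_in_cell: "e \<le> x \<Longrightarrow> \<not> b \<le> x \<Longrightarrow> p x \<in> cell"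
proof (induction x rule: wfp_induct_rule[OF wfp_less_finite])
  case (1 x)
  show ?case
  proof (cases "x = e")
    case False
    then have "e < x" using "1.prems"(1) by simp
    then obtain z where z: "e \<le> z" "covers z x" by (rule ex_cover_below)
    have "p z \<in> cell"
      using "1.IH"[OF covers_imp_less[OF z(2)] z(1)] "1.prems"(2) z(2)
      by (meson covers_imp_less order.trans less_imp_le)
    moreover have "x \<notin> {a, c1, c2, b}"
      using \<open>e < x\<close> "1.prems"(2) a_e square_covers by (auto simp: covers_def)
    ultimately show ?thesis using edge_leaving_cell[of z x] z(2) by blast
  qed (use middle_in_cell in simp)
qed

lemma below_middle_in_cell: "x \<le> e \<Longrightarrow> \<not> x \<le> a \<Longrightarrow> p x \<in> cell"
proof (induction x rule: wfp_induct_rule[OF wfp_greater_finite])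
  case (1 x)
  show ?case
  proof (cases "x = e")
    case False
    then have "x < e" using "1.prems"(1) by simp
    then obtain z where z: "covers x z" "z \<le> e" by (rule ex_cover_above)
    have "p z \<in> cell"
      using "1.IH"[OF covers_imp_less[OF z(1)] z(2)] "1.prems"(2) z(1)
      by (meson covers_imp_less order.trans less_imp_le)
    moreover have "x \<notin> {a, c1, c2, b}"
      using \<open>x < e\<close> "1.prems"(2) e_b square_covers by (auto simp: covers_def)
    ultimately show ?thesis using edge_leaving_cell[of z x] z(1) by blast
  qed (use middle_in_cell in simp)
qed

text \<open>If \<open>e\<close> had an upper cover other than \<open>b\<close>, follow a maximal element \<open>m\<close> above it that is
  not above \<open>b\<close>: \<open>m\<close> lies in the cell, while its upper cover towards \<open>b \<squnion> m\<close> lies above \<open>b\<close>, so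
  the edge between them would leave the cell through a corner.\<close>

lemma upper_cover_middle:
  assumes "covers e d"
  shows "d = b"
proof (rule ccontr)
  assume "d \<noteq> b"
  then have "\<not> b \<le> d" using assms e_b by (auto simp: covers_def)
  have "finite {x. d \<le> x \<and> \<not> b \<le> x}" "d \<in> {x. d \<le> x \<and> \<not> b \<le> x}" using \<open>\<not> b \<le> d\<close> by auto
  from finite_has_maximal2[OF this] obtain m where m: "d \<le> m" "\<not> b \<le> m"
    and maximal: "\<And>x. d \<le> x \<Longrightarrow> \<not> b \<le> x \<Longrightarrow> m \<le> x \<Longrightarrow> m = x" by blast
  have "m < sup b m" using m(2) by (simp add: less_le) (metis sup_ge1)
  then obtain w where w: "covers m w" "w \<le> sup b m" by (rule ex_cover_above)
  have "b \<le> w"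
    using maximal[of w] m(1) covers_imp_less[OF w(1)] by (metis less_imp_le order.strict_iff_not order.trans)
  moreover have "e < m" using assms m(1) covers_imp_less by (blast intro: order.strict_trans2)
  ultimately have "b < w"
    using covers_imp_less[OF w(1)] e_b unfolding covers_def by (metis order.not_eq_order_implies_strict)
  have "p m \<in> cell" using above_middle_in_cell m(2) \<open>e < m\<close> by simp
  moreover have "p w \<notin> cell"
    using planar_diagram_snd_less[OF planar \<open>b < w\<close>] unfolding cell_interior_def by auto
  ultimately have "w \<in> {a, c1, c2, b}" using edge_leaving_cell[of m w] w(1) by blast
  moreover have "a < w" "c1 < w" "c2 < w" using \<open>b < w\<close> square_covers
    by (auto simp: covers_def intro: order.strict_trans)
  ultimately show False using \<open>b < w\<close> by auto
qed

lemma lower_cover_middle: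
  assumes "covers d e"
  shows "d = a"
proof (rule ccontr)
  assume "d \<noteq> a"
  then have "\<not> d \<le> a" using assms a_e by (auto simp: covers_def)
  have "finite {x. x \<le> d \<and> \<not> x \<le> a}" "d \<in> {x. x \<le> d \<and> \<not> x \<le> a}" using \<open>\<not> d \<le> a\<close> by auto
  from finite_has_minimal2[OF this] obtain m where m: "m \<le> d" "\<not> m \<le> a"
    and minimal: "\<And>x. x \<le> d \<Longrightarrow> \<not> x \<le> a \<Longrightarrow> x \<le> m \<Longrightarrow> m = x" by blast
  have "inf a m < m" using m(2) by (simp add: less_le) (metis inf_le1)
  then obtain w where w: "inf a m \<le> w" "covers w m" by (rule ex_cover_below)
  have "w \<le> a"
    using minimal[of w] m(1) covers_imp_less[OF w(2)] by (metis less_imp_le order.strict_iff_not order.trans)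
  moreover have "m < e" using assms m(1) covers_imp_less by (blast intro: order.strict_trans1)
  ultimately have "w < a"
    using covers_imp_less[OF w(2)] a_e unfolding covers_def by (metis order.not_eq_order_implies_strict)
  have "p m \<in> cell" using below_middle_in_cell m(2) \<open>m < e\<close> by simp
  moreover have "p w \<notin> cell"
    using planar_diagram_snd_less[OF planar \<open>w < a\<close>] unfolding cell_interior_def by auto
  ultimately have "w \<in> {a, c1, c2, b}" using edge_leaving_cell[of m w] w(2) by blast
  moreover have "w < c1" "w < c2" "w < b" using \<open>w < a\<close> square_covers
    by (auto simp: covers_def intro: order.strict_trans)
  ultimately show False using \<open>w < a\<close> by auto
qed

lemma unique_covers_middle: "unique_covers e a b"
  using upper_cover_middle lower_cover_middle a_e e_b unfolding unique_covers_def by blast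

lemma eye_middle:
  assumes "semimodular TYPE('a)" "{a, b, c1, c2, e} \<subseteq> S"
  shows "eye p S e"
proof -
  have "a < c1" "c1 < b" "a < c2" "c2 < b" "a < e" "e < b"
    using square_covers a_e e_b by (simp_all add: covers_imp_less)
  moreover have "length2_in S a b"
    using semimodular_square_no_chain[OF assms(1) square] assms(2) \<open>a < c1\<close> \<open>c1 < b\<close>
    unfolding length2_in_def by (blast intro: order.strict_trans)
  moreover have "doubly_irreducible_in S e"
    using unique_covers_not_reducible_in[OF unique_covers_middle] assms(2)
    unfolding doubly_irreducible_in_def by simp
  ultimately show ?thesis
    unfolding eye_def using assms(2) slope_c1_e slope_e_c2 by blast
qed

end

section \<open>The slimming invariant\<close>

lemma two_lower_covers_in_join_reducible:
  fixes x :: "'a::lattice"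
  assumes "sup y z \<in> S" "y \<noteq> z" "covers_in S y x" "covers_in S z x"
  shows "join_reducible_in S x"
proof -
  have "y < x" "z < x" "y \<in> S" "z \<in> S" using assms(3,4) by (auto simp: covers_in_def)
  have "\<not> z \<le> y"
    using assms(2,4) \<open>y \<in> S\<close> \<open>y < x\<close> unfolding covers_in_def by (metis order.not_eq_order_implies_strict)
  then have "y < sup y z" by (simp add: less_le) (metis sup_ge2)
  moreover have "sup y z \<le> x" using \<open>y < x\<close> \<open>z < x\<close> by (simp add: less_imp_le)
  ultimately have "sup y z = x" using assms(1,3) unfolding covers_in_def by (simp add: le_less)
  then have "is_lub_in S y z x" using assms(1) unfolding is_lub_in_def by auto
  then show ?thesis using \<open>y < x\<close> \<open>z < x\<close> \<open>y \<in> S\<close> \<open>z \<in> S\<close> unfolding join_reducible_in_def by blast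
qed

lemma two_upper_covers_in_meet_reducible:
  fixes x :: "'a::lattice"
  assumes "inf y z \<in> S" "y \<noteq> z" "covers_in S x y" "covers_in S x z"
  shows "meet_reducible_in S x"
proof -
  have "x < y" "x < z" "y \<in> S" "z \<in> S" using assms(3,4) by (auto simp: covers_in_def)
  have "\<not> y \<le> z"
    using assms(2,4) \<open>y \<in> S\<close> \<open>x < y\<close> unfolding covers_in_def by (metis order.not_eq_order_implies_strict)
  then have "inf y z < y" by (simp add: less_le) (metis inf_le2)
  moreover have "x \<le> inf y z" using \<open>x < y\<close> \<open>x < z\<close> by (simp add: less_imp_le)
  ultimately have "inf y z = x" using assms(1,3) unfolding covers_in_def by (fastforce simp: le_less)
  then have "is_glb_in S y z x" using assms(1) unfolding is_glb_in_def by auto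
  then show ?thesis using \<open>x < y\<close> \<open>x < z\<close> \<open>y \<in> S\<close> \<open>z \<in> S\<close> unfolding meet_reducible_in_def by blast
qed

definition slimming_invariant :: "'a::lattice set \<Rightarrow> bool" where
  "slimming_invariant S \<longleftrightarrow>
     (\<forall>x\<in>S. \<forall>y\<in>S. covers_in S x y \<longleftrightarrow> covers x y) \<and>
     (\<forall>x\<in>S. \<forall>y\<in>S. sup x y \<in> S \<and> inf x y \<in> S) \<and>
     (\<forall>r. r \<notin> S \<longrightarrow>
        (\<exists>a b c1 c2. unique_covers r a b \<and> covering_square a c1 c2 b \<and> {a, b, c1, c2} \<subseteq> S))"

lemma slimming_invariant_UNIV: "slimming_invariant (UNIV :: 'a::lattice set)"
  by (simp add: slimming_invariant_def)

lemma
  assumes "slimming_invariant S" "x \<in> S" "y \<in> S"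
  shows slimming_invariant_covers_in: "covers_in S x y \<longleftrightarrow> covers x y"
    and slimming_invariant_sup: "sup x y \<in> S"
    and slimming_invariant_inf: "inf x y \<in> S"
  using assms unfolding slimming_invariant_def by simp_all

lemma slimming_invariant_removedE:
  assumes "slimming_invariant S" "r \<notin> S"
  obtains a b c1 c2 where "unique_covers r a b" "covering_square a c1 c2 b" "{a, b, c1, c2} \<subseteq> S"
  using assms unfolding slimming_invariant_def by blast

text \<open>A lower cover of \<open>u\<close> outside \<open>S\<close> would be the middle of a covering square of \<open>S\<close> with
  top \<open>u\<close>, which gives \<open>u\<close> two lower covers in \<open>S\<close>.\<close>

lemma slimming_invariant_unique_lower_cover:
  assumes "slimming_invariant S" "u \<in> S" "\<And>z. z \<in> S \<Longrightarrow> covers z u \<Longrightarrow> z = a" "covers z u"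
  shows "z = a"
proof (cases "z \<in> S")
  case False
  obtain a' b' c1 c2 where "unique_covers z a' b'" "covering_square a' c1 c2 b'" "{a', b', c1, c2} \<subseteq> S"
    using assms(1) False by (rule slimming_invariant_removedE)
  moreover from this(1) have "b' = u" using assms(4) by (simp add: unique_covers_def)
  ultimately show ?thesis using assms(3) by (auto simp: covering_square_def)
qed (use assms in blast)

lemma slimming_invariant_unique_upper_cover:
  assumes "slimming_invariant S" "u \<in> S" "\<And>z. z \<in> S \<Longrightarrow> covers u z \<Longrightarrow> z = b" "covers u z"
  shows "z = b"
proof (cases "z \<in> S")
  case False
  obtain a' b' c1 c2 where "unique_covers z a' b'" "covering_square a' c1 c2 b'" "{a', b', c1, c2} \<subseteq> S"
    using assms(1) False by (rule slimming_invariant_removedE)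
  moreover from this(1) have "a' = u" using assms(4) by (simp add: unique_covers_def)
  ultimately show ?thesis using assms(3) by (auto simp: covering_square_def)
qed (use assms in blast)

lemma eye_unique_covers:
  assumes "slimming_invariant S" "eye p S e"
  obtains a b c1 c2 where "unique_covers e a b" "covering_square a c1 c2 b" "{a, b, c1, c2} \<subseteq> S - {e}"
proof -
  obtain a b c1 c2 where e: "e \<in> S" "doubly_irreducible_in S e" "length2_in S a b"
    "a < e" "e < b" "c1 \<in> S" "c2 \<in> S" "a < c1" "c1 < b" "a < c2" "c2 < b"
    "slope p a c1 < slope p a e" "slope p a e < slope p a c2"
    using assms(2) unfolding eye_def by blast
  have "a \<in> S" "b \<in> S" using e(3) by (simp_all add: length2_in_def)
  have between: "covers a x \<and> covers x b" if "x \<in> S" "a < x" "x < b" for x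
  proof -
    have "covers_in S a x" "covers_in S x b"
      using that e(3) unfolding length2_in_def covers_in_def by blast+
    then show ?thesis using slimming_invariant_covers_in[OF assms(1)] that(1) \<open>a \<in> S\<close> \<open>b \<in> S\<close> by blast
  qed
  have "covering_square a c1 c2 b"
    using between e(6-13) unfolding covering_square_def by auto
  have "covers_in S a e" "covers_in S e b"
    using between[OF e(1,4,5)] slimming_invariant_covers_in[OF assms(1)] e(1) \<open>a \<in> S\<close> \<open>b \<in> S\<close> by blast+
  have lower: "z = a" if "z \<in> S" "covers z e" for z
  proof (rule ccontr)
    assume "z \<noteq> a"
    moreover have "covers_in S z e" using that slimming_invariant_covers_in[OF assms(1)] e(1) by blast
    ultimately have "join_reducible_in S e"
      using two_lower_covers_in_join_reducible[OF _ _ _ \<open>covers_in S a e\<close>]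
        slimming_invariant_sup[OF assms(1) that(1) \<open>a \<in> S\<close>] by blast
    then show False using e(2) by (simp add: doubly_irreducible_in_def reducible_in_def)
  qed
  have upper: "z = b" if "z \<in> S" "covers e z" for z
  proof (rule ccontr)
    assume "z \<noteq> b"
    moreover have "covers_in S e z" using that slimming_invariant_covers_in[OF assms(1)] e(1) by blast
    ultimately have "meet_reducible_in S e"
      using two_upper_covers_in_meet_reducible[OF _ _ _ \<open>covers_in S e b\<close>]
        slimming_invariant_inf[OF assms(1) that(1) \<open>b \<in> S\<close>] by blast
    then show False using e(2) by (simp add: doubly_irreducible_in_def reducible_in_def)
  qed
  have "unique_covers e a b"
    unfolding unique_covers_def
    using between[OF e(1,4,5)] slimming_invariant_unique_lower_cover[OF assms(1) e(1) lower]
      slimming_invariant_unique_upper_cover[OF assms(1) e(1) upper]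
    by blast
  moreover have "{a, b, c1, c2} \<subseteq> S - {e}"
    using e \<open>a \<in> S\<close> \<open>b \<in> S\<close> by auto
  ultimately show thesis using that \<open>covering_square a c1 c2 b\<close> by blast
qed

lemma covers_in_Diff_eye:
  fixes S :: "'a::{finite,lattice} set"
  assumes "slimming_invariant S" "eye p S e" "x \<in> S - {e}" "y \<in> S - {e}"
  shows "covers_in (S - {e}) x y \<longleftrightarrow> covers x y"
proof
  assume "covers x y"
  then show "covers_in (S - {e}) x y"
    using slimming_invariant_covers_in[OF assms(1)] assms(3,4) unfolding covers_in_def by blast
next
  assume xy: "covers_in (S - {e}) x y"
  obtain a b c1 c2 where e: "unique_covers e a b" "covering_square a c1 c2 b" "{a, b, c1, c2} \<subseteq> S - {e}"
    using assms(1,2) by (rule eye_unique_covers)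
  have "covers_in S x y"
  proof (rule ccontr)
    assume "\<not> covers_in S x y"
    then have "x < e" "e < y" using xy assms(3,4) unfolding covers_in_def by blast+
    then have "x \<le> a" "b \<le> y"
      using unique_covers_le_iff[OF e(1) order.strict_implies_not_eq[OF \<open>x < e\<close>]]
        unique_covers_ge_iff[OF e(1) order.strict_implies_not_eq[OF \<open>e < y\<close>, symmetric]]
      by (simp_all add: less_imp_le)
    moreover have "a < e" "e < b" using unique_covers_covers[OF e(1)] by (simp_all add: covers_imp_less)
    ultimately have "x < a \<or> x = a" "a < y" "b < y \<or> y = b" "x < b"
      using \<open>x < e\<close> \<open>e < y\<close> by (auto simp: le_less)
    then have "x = a" "y = b" using xy e(3) unfolding covers_in_def by blast+
    moreover have "a < c1" "c1 < b" using e(2) by (auto simp: covering_square_def covers_def)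
    ultimately show False using xy e(3) unfolding covers_in_def by blast
  qed
  then show "covers x y" using slimming_invariant_covers_in[OF assms(1)] assms(3,4) by blast
qed

lemma sup_in_Diff_join_irreducible:
  fixes x :: "'a::lattice"
  assumes "sup x y \<in> S" "x \<in> S - {e}" "y \<in> S - {e}" "\<not> join_reducible_in S e"
  shows "sup x y \<in> S - {e}"
proof -
  have "sup x y \<noteq> e"
  proof
    assume join: "sup x y = e"
    then have "x < e" "y < e" "is_lub_in S x y e"
      using assms(1-3) unfolding is_lub_in_def by (auto simp: less_le simp flip: join)
    then show False using assms(2-4) unfolding join_reducible_in_def by blast
  qed
  then show ?thesis using assms(1) by blast
qed

lemma inf_in_Diff_meet_irreducible:
  fixes x :: "'a::lattice"
  assumes "inf x y \<in> S" "x \<in> S - {e}" "y \<in> S - {e}" "\<not> meet_reducible_in S e"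
  shows "inf x y \<in> S - {e}"
proof -
  have "inf x y \<noteq> e"
  proof
    assume meet: "inf x y = e"
    then have "e < x" "e < y" "is_glb_in S x y e"
      using assms(1-3) unfolding is_glb_in_def by (auto simp: less_le simp flip: meet)
    then show False using assms(2-4) unfolding meet_reducible_in_def by blast
  qed
  then show ?thesis using assms(1) by blast
qed

text \<open>An element omitted earlier keeps its covering square unless the square passes through
  the eye \<open>e\<close>; in that case it is a twin of \<open>e\<close> and inherits the square of \<open>e\<close>.\<close>

lemma removed_Diff_eye:
  assumes "slimming_invariant S" "eye p S e" "r \<notin> S - {e}"
  shows "\<exists>a b c1 c2. unique_covers r a b \<and> covering_square a c1 c2 b \<and> {a, b, c1, c2} \<subseteq> S - {e}"
proof -
  obtain a b c1 c2 where e: "unique_covers e a b" "covering_square a c1 c2 b" "{a, b, c1, c2} \<subseteq> S - {e}"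
    using assms(1,2) by (rule eye_unique_covers)
  show ?thesis
  proof (cases "r = e")
    case False
    then obtain a' b' d1 d2 where r: "unique_covers r a' b'" "covering_square a' d1 d2 b'"
      "{a', b', d1, d2} \<subseteq> S"
      using assms(1,3) slimming_invariant_removedE by blast
    have "a' \<noteq> e" "b' \<noteq> e"
      using e(1) r(2) unfolding unique_covers_def covering_square_def by metis+
    show ?thesis
    proof (cases "e \<in> {d1, d2}")
      case True
      then have "a' = a" "b' = b"
        using e(1) r(2) unfolding unique_covers_def covering_square_def by auto
      then show ?thesis using r(1) e(2,3) by blast
    next
      case False
      then show ?thesis using r \<open>a' \<noteq> e\<close> \<open>b' \<noteq> e\<close> by blast
    qed
  qed (use e in blast)
qed

lemma slimming_invariant_Diff_eye:
  fixes S :: "'a::{finite,lattice} set"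
  assumes "slimming_invariant S" "eye p S e"
  shows "slimming_invariant (S - {e})"
proof -
  have "\<not> join_reducible_in S e" "\<not> meet_reducible_in S e"
    using assms(2) by (simp_all add: eye_def doubly_irreducible_in_def reducible_in_def)
  then show ?thesis
    unfolding slimming_invariant_def[of "S - {e}"]
    using covers_in_Diff_eye[OF assms] removed_Diff_eye[OF assms]
      sup_in_Diff_join_irreducible[OF slimming_invariant_sup[OF assms(1)]]
      inf_in_Diff_meet_irreducible[OF slimming_invariant_inf[OF assms(1)]]
    by (intro conjI ballI allI impI) auto
qed

lemma slimming_invariant_full_slimming:
  fixes S :: "'a::{finite,lattice} set"
  assumes "full_slimming p S"
  shows "slimming_invariant S"
proof -
  have "(slimming_step p)\<^sup>*\<^sup>* UNIV S" using assms by (simp add: full_slimming_def)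
  then show ?thesis
  proof (induction rule: rtranclp_induct)
    case base
    show ?case by (rule slimming_invariant_UNIV)
  next
    case (step T T')
    then show ?case using slimming_invariant_Diff_eye by (auto simp: slimming_step_def)
  qed
qed

section \<open>Atoms of covering squares in a full slimming\<close>

definition interval_atoms :: "'a::order \<Rightarrow> 'a \<Rightarrow> 'a set" where
  "interval_atoms a b = {c. covers a c \<and> covers c b}"

lemma slimming_invariant_atoms_le_one_if_removed:
  assumes "slimming_invariant S" "a \<notin> S \<or> b \<notin> S"
  shows "card (interval_atoms a b \<inter> S) \<le> 1"
proof -
  obtain r where "r \<in> {a, b}" "r \<notin> S" using assms(2) by blast
  then obtain a' b' where r: "unique_covers r a' b'"
    using assms(1) slimming_invariant_removedE by metis
  have "interval_atoms a b \<inter> S \<subseteq> {if r = a then b' else a'}"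
    using r \<open>r \<in> {a, b}\<close> by (auto simp: interval_atoms_def unique_covers_def)
  then show ?thesis using card_mono[of "{if r = a then b' else a'}"] by fastforce
qed

lemma card_interval_atoms_in_full_slimming:
  fixes S :: "'a::{finite,lattice} set"
  assumes "semimodular TYPE('a)" "planar_diagram p" "full_slimming p S"
  shows "card (interval_atoms a b \<inter> S) \<le> 2"
proof (rule ccontr)
  define X where "X = interval_atoms a b \<inter> S"
  assume "\<not> card (interval_atoms a b \<inter> S) \<le> 2"
  then have "card X \<ge> 3" by (simp add: X_def)
  then have "a \<in> S \<and> b \<in> S"
    using slimming_invariant_atoms_le_one_if_removed[OF slimming_invariant_full_slimming[OF assms(3)], of a b]
    unfolding X_def by linarith
  then have "a \<in> S" "b \<in> S" by simp_all
  have "X \<noteq> {}" using \<open>card X \<ge> 3\<close> by auto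
  then have "Min (slope p a ` X) \<in> slope p a ` X" "Max (slope p a ` X) \<in> slope p a ` X"
    by simp_all
  then obtain c1 c2 where c1: "c1 \<in> X" "slope p a c1 = Min (slope p a ` X)"
    and c2: "c2 \<in> X" "slope p a c2 = Max (slope p a ` X)"
    by (metis imageE)
  have "card (X - {c1, c2}) > 0"
    using \<open>card X \<ge> 3\<close> diff_card_le_card_Diff[of "{c1, c2}" X] card_insert_le_m1[of 2 "{c2}" c1] by simp
  then obtain e where e: "e \<in> X" "e \<noteq> c1" "e \<noteq> c2" by (metis Diff_iff card_gt_0_iff ex_in_conv insertCI)
  have atoms: "covers a c \<and> covers c b \<and> c \<in> S" if "c \<in> X" for c
    using that by (simp add: X_def interval_atoms_def)
  have "slope p a c1 \<le> slope p a e" "slope p a e \<le> slope p a c2"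
    using c1(2) c2(2) e(1) by simp_all
  moreover have "slope p a c1 \<noteq> slope p a e" "slope p a e \<noteq> slope p a c2"
    using atoms[OF c1(1)] atoms[OF c2(1)] atoms[OF e(1)] e(2,3) planar_diagram_slope_neq[OF assms(2)]
    by metis+
  ultimately have "slope p a c1 < slope p a e" "slope p a e < slope p a c2" by simp_all
  then interpret planar_cell p a c1 e c2 b
    using assms(2) atoms c1(1) c2(1) e(1) by unfold_locales (auto simp: covering_square_def)
  have "eye p S e" by (rule eye_middle) (use assms(1) atoms c1(1) c2(1) e(1) \<open>a \<in> S\<close> \<open>b \<in> S\<close> in auto)
  then show False using assms(3) by (simp add: full_slimming_def)
qed

lemma removed_interval_atom_iff:
  assumes "slimming_invariant S" "y \<notin> S"
  shows "y \<in> interval_atoms a b \<longleftrightarrow> unique_covers y a b"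
proof -
  obtain a' b' where "unique_covers y a' b'" using assms slimming_invariant_removedE by metis
  then show ?thesis by (auto simp: interval_atoms_def unique_covers_def)
qed

text \<open>Once one atom of \<open>[a, b]\<close> has been omitted, the square it lies in keeps two atoms, so
  exactly \<open>min k 2\<close> of the \<open>k\<close> atoms survive.\<close>

lemma card_removed_interval_atoms:
  fixes S :: "'a::{finite,lattice} set"
  assumes "semimodular TYPE('a)" "planar_diagram p" "full_slimming p S"
  shows "card (interval_atoms a b - S) = card (interval_atoms a b) - min (card (interval_atoms a b)) 2"
proof -
  have inv: "slimming_invariant S" using assms(3) by (rule slimming_invariant_full_slimming)
  have le2: "card (interval_atoms a b \<inter> S) \<le> 2"
    using card_interval_atoms_in_full_slimming[OF assms] .
  have "card (interval_atoms a b \<inter> S) = min (card (interval_atoms a b)) 2"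
  proof (cases "interval_atoms a b \<subseteq> S")
    case True
    then show ?thesis using le2 by (simp add: Int_absorb2)
  next
    case False
    then obtain r where r: "r \<in> interval_atoms a b" "r \<notin> S" by blast
    obtain a' b' c1 c2 where W: "unique_covers r a' b'" "covering_square a' c1 c2 b'" "{a', b', c1, c2} \<subseteq> S"
      using inv r(2) by (rule slimming_invariant_removedE)
    have "a' = a" "b' = b"
      using unique_covers_determined[OF W(1)] removed_interval_atom_iff[OF inv r(2)] r(1) by blast+
    then have "{c1, c2} \<subseteq> interval_atoms a b \<inter> S" "c1 \<noteq> c2"
      using W by (auto simp: interval_atoms_def covering_square_def)
    then have "card (interval_atoms a b \<inter> S) = 2"
      using le2 card_mono[of "interval_atoms a b \<inter> S" "{c1, c2}"] by simp
    moreover have "card {r, c1, c2} \<le> card (interval_atoms a b)"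
      using \<open>{c1, c2} \<subseteq> _\<close> r(1) by (intro card_mono) auto
    then have "card (interval_atoms a b) \<ge> 3"
      using \<open>c1 \<noteq> c2\<close> \<open>{c1, c2} \<subseteq> _\<close> r(2) by (auto simp: card_insert_if split: if_splits)
    ultimately show ?thesis by simp
  qed
  then show ?thesis by (simp add: card_Diff_subset_Int)
qed

section \<open>Twins\<close>

definition twins :: "'a::order \<Rightarrow> 'a \<Rightarrow> bool" where
  "twins x y \<longleftrightarrow> x = y \<or> (\<exists>a b. unique_covers x a b \<and> unique_covers y a b)"

lemma equivp_twins: "equivp twins"
proof (rule equivpI)
  show "reflp twins" by (simp add: reflp_def twins_def)
  show "symp twins" by (auto simp: symp_def twins_def)
  show "transp twins" unfolding transp_def twins_def by (metis unique_covers_determined)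
qed

lemma twins_eq_if_reducible:
  fixes x :: "'a::{finite,order}"
  assumes "twins y x" "reducible_in UNIV x"
  shows "y = x"
  using assms unique_covers_not_reducible_in[of x _ _ UNIV] unfolding twins_def by blast

text \<open>Twins have the same lower and upper covers, so exchanging twins cannot change
  comparabilities between non-twins.\<close>

lemma twins_le:
  fixes x :: "'a::{finite,order}"
  assumes "twins x x'" "twins y y'" "x = y \<longleftrightarrow> x' = y'" "x \<le> y"
  shows "x' \<le> y'"
proof (cases "x = y")
  case False
  then have "x' \<noteq> y'" using assms(3) by simp
  show ?thesis
  proof (cases "x' = x")
    case True
    show ?thesis
    proof (cases "y' = y")
      case False
      then obtain c d where "unique_covers y c d" "unique_covers y' c d"
        using assms(2) unfolding twins_def by blast
      then show ?thesis
        using unique_covers_le_iff \<open>x \<noteq> y\<close> \<open>x' \<noteq> y'\<close> \<open>x' = x\<close> assms(4) by metis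
    qed (use \<open>x' = x\<close> assms(4) in simp)
  next
    case False
    then obtain a b where x: "unique_covers x a b" "unique_covers x' a b"
      using assms(1) unfolding twins_def by metis
    have "b \<le> y" using unique_covers_ge_iff[OF x(1)] \<open>x \<noteq> y\<close> assms(4) by metis
    have "b \<le> y'"
    proof (cases "y' = y")
      case False
      then obtain c d where y: "unique_covers y c d" "unique_covers y' c d"
        using assms(2) unfolding twins_def by blast
      have "b \<noteq> y"
      proof
        assume "b = y"
        moreover have "covers x b" "covers x' b" using x unique_covers_covers by blast+
        ultimately have "x = c" "x' = c" using y(1) by (simp_all add: unique_covers_def)
        then show False using \<open>x' \<noteq> x\<close> by simp
      qed
      then have "b \<le> c" using unique_covers_le_iff[OF y(1)] \<open>b \<le> y\<close> by blast
      then show ?thesis using unique_covers_covers[OF y(2)] by (auto dest: covers_imp_less)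
    qed (use \<open>b \<le> y\<close> in simp)
    then show ?thesis using unique_covers_ge_iff[OF x(2)] \<open>x' \<noteq> y'\<close> by metis
  qed
qed (use assms in simp)

lemma ex_bij_betw_within_classes:
  assumes "equivp R" "finite X" "finite Y" "\<And>x. card {y\<in>X. R y x} = card {y\<in>Y. R y x}"
  shows "\<exists>f. bij_betw f X Y \<and> (\<forall>x\<in>X. R (f x) x)"
  using assms(2-4)
proof (induction X arbitrary: Y rule: finite_induct)
  case empty
  have "Y = {}"
  proof (rule ccontr)
    assume "Y \<noteq> {}"
    then obtain y where "y \<in> Y" by blast
    then have "{y'\<in>Y. R y' y} \<noteq> {}" using equivp_reflp[OF assms(1)] by blast
    then show False using empty.prems(1) empty.prems(2)[of y] by auto
  qed
  then show ?case by (auto simp: bij_betw_def)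
next
  case (insert x X)
  have "{y\<in>insert x X. R y x} \<noteq> {}" using equivp_reflp[OF assms(1)] by blast
  then have "card {y\<in>insert x X. R y x} \<noteq> 0" using insert.hyps(1) by simp
  then have "card {y\<in>Y. R y x} \<noteq> 0" using insert.prems(2)[of x] by simp
  then obtain y0 where y0: "y0 \<in> Y" "R y0 x" by (metis (no_types, lifting) card.empty empty_Collect_eq)
  have "card {y\<in>X. R y z} = card {y\<in>Y - {y0}. R y z}" for z
  proof -
    have "{y\<in>insert x X. R y z} = (if R x z then insert x {y\<in>X. R y z} else {y\<in>X. R y z})"
      "{y\<in>Y. R y z} = (if R y0 z then insert y0 {y\<in>Y - {y0}. R y z} else {y\<in>Y - {y0}. R y z})"
      using y0(1) by auto
    then have "card {y\<in>insert x X. R y z} = card {y\<in>X. R y z} + (if R x z then 1 else 0)"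
      "card {y\<in>Y. R y z} = card {y\<in>Y - {y0}. R y z} + (if R y0 z then 1 else 0)"
      using insert.hyps(1,2) insert.prems(1) by simp_all
    moreover have "R x z \<longleftrightarrow> R y0 z" using y0(2) assms(1) by (meson equivp_symp equivp_transp)
    ultimately show ?thesis using insert.prems(2)[of z] by simp
  qed
  then obtain f where f: "bij_betw f X (Y - {y0})" "\<forall>x\<in>X. R (f x) x"
    using insert.IH[of "Y - {y0}"] insert.prems(1) by auto
  have "bij_betw (f(x := y0)) X (Y - {y0}) \<longleftrightarrow> bij_betw f X (Y - {y0})"
    by (rule bij_betw_cong) (use insert.hyps(2) in auto)
  with f(1) have "bij_betw (f(x := y0)) X (Y - {y0})" by simp
  moreover have "bij_betw (f(x := y0)) {x} {y0}" by (simp add: bij_betw_def)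
  ultimately have "bij_betw (f(x := y0)) (X \<union> {x}) ((Y - {y0}) \<union> {y0})"
    by (rule bij_betw_combine) blast
  moreover have "X \<union> {x} = insert x X" "(Y - {y0}) \<union> {y0} = Y" using y0(1) by auto
  ultimately have "bij_betw (f(x := y0)) (insert x X) Y" by simp
  moreover have "\<forall>z\<in>insert x X. R ((f(x := y0)) z) z" using f(2) y0(2) insert.hyps(2) by auto
  ultimately show ?case by blast
qed

lemma ex_perm_within_classes:
  fixes R :: "'a::finite \<Rightarrow> 'a \<Rightarrow> bool"
  assumes "equivp R" "\<And>x. card {y\<in>X. R y x} = card {y\<in>Y. R y x}"
  obtains \<pi> where "bij \<pi>" "\<And>x. R (\<pi> x) x" "\<pi> ` X = Y"
proof -
  obtain f where f: "bij_betw f X Y" "\<forall>x\<in>X. R (f x) x"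
    using ex_bij_betw_within_classes[OF assms(1) finite finite assms(2)] by blast
  have "card {y\<in>-X. R y x} = card {y\<in>-Y. R y x}" for x
  proof -
    have "{y\<in>-X. R y x} = {y. R y x} - {y\<in>X. R y x}" "{y\<in>-Y. R y x} = {y. R y x} - {y\<in>Y. R y x}"
      by auto
    then show ?thesis using assms(2)[of x] by (simp only:) (subst (1 2) card_Diff_subset; auto)
  qed
  then obtain g where g: "bij_betw g (-X) (-Y)" "\<forall>x\<in>-X. R (g x) x"
    using ex_bij_betw_within_classes[OF assms(1) finite finite] by blast
  define \<pi> where "\<pi> z = (if z \<in> X then f z else g z)" for z
  have "bij_betw \<pi> X Y \<longleftrightarrow> bij_betw f X Y" "bij_betw \<pi> (-X) (-Y) \<longleftrightarrow> bij_betw g (-X) (-Y)"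
    by (rule bij_betw_cong, simp add: \<pi>_def)+
  then have "bij_betw \<pi> X Y" "bij_betw \<pi> (-X) (-Y)" using f(1) g(1) by simp_all
  then have "bij \<pi>" using bij_betw_combine[of \<pi> X Y "-X" "-Y"] by simp
  moreover have "R (\<pi> x) x" for x using f(2) g(2) by (cases "x \<in> X") (simp_all add: \<pi>_def)
  moreover have "\<pi> ` X = Y" using \<open>bij_betw \<pi> X Y\<close> by (simp add: bij_betw_def)
  ultimately show thesis by (rule that)
qed

section \<open>Order isomorphisms\<close>

locale order_isomorphism =
  fixes f :: "'a::{finite,lattice} \<Rightarrow> 'b::{finite,lattice}"
  assumes bij: "bij f" and le_iff [simp]: "f x \<le> f y \<longleftrightarrow> x \<le> y"
begin

lemma inj: "inj f"
  using bij by (simp add: bij_def)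

lemma surj: "surj f"
  using bij by (simp add: bij_def)

lemma eq_iff [simp]: "f x = f y \<longleftrightarrow> x = y"
  using inj by (auto dest: injD)

lemma less_iff [simp]: "f x < f y \<longleftrightarrow> x < y"
  by (simp add: less_le)

lemma ex_iff: "(\<exists>y. P y) \<longleftrightarrow> (\<exists>x. P (f x))"
  using surj by (metis surjD)

lemma all_iff: "(\<forall>y. P y) \<longleftrightarrow> (\<forall>x. P (f x))"
  using surj by (metis surjD)

lemma covers_iff [simp]: "covers (f x) (f y) \<longleftrightarrow> covers x y"
  unfolding covers_def by (subst ex_iff) simp

lemma covers_in_image_iff [simp]: "covers_in (f ` S) (f x) (f y) \<longleftrightarrow> covers_in S x y"
  unfolding covers_in_def by (auto simp: inj_image_mem_iff[OF inj])

lemma unique_covers_iff [simp]: "unique_covers (f r) (f a) (f b) \<longleftrightarrow> unique_covers r a b"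
  unfolding unique_covers_def by (subst (1 2) all_iff) simp

lemma ex_unique_covers_iff: "(\<exists>a b. unique_covers (f r) a b) \<longleftrightarrow> (\<exists>a b. unique_covers r a b)"
  by (subst ex_iff, subst ex_iff) simp

lemma twins_iff [simp]: "twins (f x) (f y) \<longleftrightarrow> twins x y"
  unfolding twins_def by (subst ex_iff, subst ex_iff) simp

lemma card_interval_atoms [simp]: "card (interval_atoms (f a) (f b)) = card (interval_atoms a b)"
proof -
  have "interval_atoms (f a) (f b) = f ` interval_atoms a b"
  proof
    show "interval_atoms (f a) (f b) \<subseteq> f ` interval_atoms a b"
    proof
      fix y assume y: "y \<in> interval_atoms (f a) (f b)"
      obtain x where "y = f x" using surj by (metis surjD)
      then show "y \<in> f ` interval_atoms a b" using y by (auto simp: interval_atoms_def)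
    qed
  qed (auto simp: interval_atoms_def)
  then show ?thesis using card_image[OF inj_on_subset[OF inj subset_UNIV]] by simp
qed

lemma sup_hom: "f (sup x y) = sup (f x) (f y)"
proof (rule order.antisym)
  obtain z where z: "f z = sup (f x) (f y)" using surj by (metis surjD)
  then have "sup x y \<le> z" by (metis le_iff le_sup_iff order.refl)
  then show "f (sup x y) \<le> sup (f x) (f y)" using z by (metis le_iff)
qed simp

lemma inf_hom: "f (inf x y) = inf (f x) (f y)"
proof (rule order.antisym)
  obtain z where z: "f z = inf (f x) (f y)" using surj by (metis surjD)
  then have "z \<le> inf x y" by (metis le_iff le_inf_iff order.refl)
  then show "inf (f x) (f y) \<le> f (inf x y)" using z by (metis le_iff)
qed simp

lemma lattice_iso: "lattice_iso f"
  unfolding lattice_iso_def using bij sup_hom inf_hom by blast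

lemma lattice_iso_on_image: "lattice_iso_on f S (f ` S)"
  unfolding lattice_iso_on_def using inj_on_subset[OF inj subset_UNIV] sup_hom inf_hom
  by (simp add: bij_betw_def)

lemma nu_le_image: "nu S x \<le> nu (f ` S) (f x)"
  unfolding nu_def
proof (rule card_inj_on_le[OF inj_on_subset[OF inj subset_UNIV]])
  show "f ` {e. e \<notin> S \<and> (\<exists>c1 c2 t. c1 \<noteq> c2 \<and> covers_in S x c1 \<and> covers_in S x c2 \<and>
          covers_in S c1 t \<and> covers_in S c2 t \<and> x < e \<and> e < t)}
      \<subseteq> {e. e \<notin> f ` S \<and> (\<exists>c1 c2 t. c1 \<noteq> c2 \<and> covers_in (f ` S) (f x) c1 \<and>
          covers_in (f ` S) (f x) c2 \<and> covers_in (f ` S) c1 t \<and> covers_in (f ` S) c2 t \<and>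
          f x < e \<and> e < t)}"
  proof clarify
    fix e c1 c2 t
    assume "e \<notin> S" "c1 \<noteq> c2" "covers_in S x c1" "covers_in S x c2" "covers_in S c1 t"
      "covers_in S c2 t" "x < e" "e < t"
    then show "f e \<notin> f ` S \<and> (\<exists>c1 c2 t'. c1 \<noteq> c2 \<and> covers_in (f ` S) (f x) c1 \<and>
        covers_in (f ` S) (f x) c2 \<and> covers_in (f ` S) c1 t' \<and> covers_in (f ` S) c2 t' \<and>
        f x < f e \<and> f e < t')"
      by (intro conjI exI[of _ "f c1"] exI[of _ "f c2"] exI[of _ "f t"])
        (simp_all add: inj_image_mem_iff[OF inj])
  qed
qed simp

end

lemma order_isomorphism_inv:
  assumes "order_isomorphism f"
  shows "order_isomorphism (inv f)"
proof
  interpret order_isomorphism f by fact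
  show "bij (inv f)" using bij by (rule bij_imp_bij_inv)
  fix x y
  have "inv f x \<le> inv f y \<longleftrightarrow> f (inv f x) \<le> f (inv f y)" by simp
  then show "inv f x \<le> inv f y \<longleftrightarrow> x \<le> y" by (simp add: surj_f_inv_f[OF surj])
qed

lemma (in order_isomorphism) nu_image: "nu (f ` S) (f x) = nu S x"
proof -
  interpret inverse: order_isomorphism "inv f" by (rule order_isomorphism_inv) unfold_locales
  have "nu (f ` S) (f x) \<le> nu (inv f ` f ` S) (inv f (f x))" by (rule inverse.nu_le_image)
  then have "nu (f ` S) (f x) \<le> nu S x" by (simp add: image_inv_f_f[OF inj] inv_f_f[OF inj])
  then show ?thesis using nu_le_image[of S x] by linarith
qed

lemma lattice_iso_order_isomorphism:
  fixes f :: "'a::{finite,lattice} \<Rightarrow> 'b::{finite,lattice}"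
  assumes "lattice_iso f"
  shows "order_isomorphism f"
proof
  show "bij f" using assms by (simp add: lattice_iso_def)
  then have "inj f" by (simp add: bij_def)
  fix x y
  have "x \<le> y \<longleftrightarrow> f (sup x y) = f y" using \<open>inj f\<close> by (auto simp: le_iff_sup dest: injD)
  then show "f x \<le> f y \<longleftrightarrow> x \<le> y" using assms by (simp add: lattice_iso_def le_iff_sup)
qed

lemma order_isomorphism_comp:
  assumes "order_isomorphism f" "order_isomorphism g"
  shows "order_isomorphism (g \<circ> f)"
  using assms unfolding order_isomorphism_def by (auto intro: bij_comp)

section \<open>Full slimmings of isomorphic lattices\<close>

lemma removed_twins_unique_covers:
  fixes x :: "'a::{finite,lattice}"
  assumes "slimming_invariant S" "unique_covers x a b"
  shows "{y. y \<notin> S \<and> twins y x} = interval_atoms a b - S"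
proof -
  have "unique_covers x a' b' \<longleftrightarrow> a' = a \<and> b' = b" for a' b'
    using unique_covers_determined[OF assms(2)] assms(2) by blast
  then have "twins y x \<longleftrightarrow> unique_covers y a b" for y
    using assms(2) unfolding twins_def by auto
  then show ?thesis using removed_interval_atom_iff[OF assms(1)] by auto
qed

lemma removed_twins_no_unique_covers:
  assumes "slimming_invariant S" "\<nexists>a b. unique_covers x a b"
  shows "{y. y \<notin> S \<and> twins y x} = {}"
proof -
  have "\<not> twins y x" if "y \<notin> S" for y
  proof
    assume "twins y x"
    obtain a b c1 c2 where "unique_covers y a b" "covering_square a c1 c2 b" "{a, b, c1, c2} \<subseteq> S"
      using assms(1) \<open>y \<notin> S\<close> by (rule slimming_invariant_removedE)
    then show False using \<open>twins y x\<close> assms(2) unfolding twins_def by blast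
  qed
  then show ?thesis by blast
qed

lemma card_removed_twins_iso:
  fixes S :: "'a::{finite,lattice} set" and S' :: "'b::{finite,lattice} set"
  assumes "semimodular TYPE('a)" "semimodular TYPE('b)" "planar_diagram p" "planar_diagram q"
    "full_slimming p S" "full_slimming q S'" "order_isomorphism \<phi>"
  shows "card {y. y \<notin> S \<and> twins y x} = card {y. \<phi> y \<notin> S' \<and> twins y x}"
proof -
  interpret order_isomorphism \<phi> by fact
  have preimage: "{y. \<phi> y \<notin> S' \<and> twins y x} = \<phi> -` {z. z \<notin> S' \<and> twins z (\<phi> x)}" by auto
  have "card {y. \<phi> y \<notin> S' \<and> twins y x} = card {z. z \<notin> S' \<and> twins z (\<phi> x)}"
    unfolding preimage by (rule card_vimage_inj[OF inj]) (use surj in auto)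
  moreover have "card {y. y \<notin> S \<and> twins y x} = card {z. z \<notin> S' \<and> twins z (\<phi> x)}"
  proof (cases "\<exists>a b. unique_covers x a b")
    case True
    then obtain a b where "unique_covers x a b" by blast
    then have "unique_covers (\<phi> x) (\<phi> a) (\<phi> b)" by simp
    have "card {y. y \<notin> S \<and> twins y x} = card (interval_atoms a b) - min (card (interval_atoms a b)) 2"
      using removed_twins_unique_covers[OF slimming_invariant_full_slimming[OF assms(5)] \<open>unique_covers x a b\<close>]
        card_removed_interval_atoms[OF assms(1,3,5)] by simp
    moreover have "card {z. z \<notin> S' \<and> twins z (\<phi> x)} =
        card (interval_atoms (\<phi> a) (\<phi> b)) - min (card (interval_atoms (\<phi> a) (\<phi> b))) 2"
      using removed_twins_unique_covers[OF slimming_invariant_full_slimming[OF assms(6)]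
          \<open>unique_covers (\<phi> x) (\<phi> a) (\<phi> b)\<close>]
        card_removed_interval_atoms[OF assms(2,4,6)] by simp
    ultimately show ?thesis by simp
  next
    case False
    moreover from this have "\<nexists>a b. unique_covers (\<phi> x) a b" using ex_unique_covers_iff by blast
    ultimately show ?thesis
      using removed_twins_no_unique_covers[OF slimming_invariant_full_slimming[OF assms(5)]]
        removed_twins_no_unique_covers[OF slimming_invariant_full_slimming[OF assms(6)]]
      by (metis card.empty)
  qed
  ultimately show ?thesis by simp
qed

lemma twins_perm_order_isomorphism:
  fixes \<pi> :: "'a::{finite,lattice} \<Rightarrow> 'a"
  assumes "bij \<pi>" "\<And>x. twins (\<pi> x) x"
  shows "order_isomorphism \<pi>"
proof
  show "bij \<pi>" by fact
  fix x y
  have eq: "\<pi> x = \<pi> y \<longleftrightarrow> x = y" using bij_is_inj[OF assms(1)] by (auto dest: injD)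
  have "twins x (\<pi> x)" "twins y (\<pi> y)"
    using assms(2) equivp_symp[OF equivp_twins] by blast+
  show "\<pi> x \<le> \<pi> y \<longleftrightarrow> x \<le> y"
  proof
    assume "\<pi> x \<le> \<pi> y"
    then show "x \<le> y" using twins_le[OF assms(2) assms(2)] eq by blast
  next
    assume "x \<le> y"
    then show "\<pi> x \<le> \<pi> y" using twins_le[OF \<open>twins x (\<pi> x)\<close> \<open>twins y (\<pi> y)\<close>] eq by blast
  qed
qed

theorem full_slimming_iso:
  fixes S :: "'a::{finite,lattice} set" and S' :: "'b::{finite,lattice} set" and \<phi> :: "'a \<Rightarrow> 'b"
  assumes "semimodular TYPE('a)" "semimodular TYPE('b)" "planar_diagram p" "planar_diagram q"
    "full_slimming p S" "full_slimming q S'" "lattice_iso \<phi>"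
  shows "\<exists>\<pi>::'a \<Rightarrow> 'a. lattice_iso \<pi> \<and> (\<forall>x. reducible_in UNIV x \<longrightarrow> \<pi> x = x) \<and>
     lattice_iso_on (\<phi> \<circ> \<pi>) S S' \<and> (\<forall>x\<in>S. nu S x = nu S' ((\<phi> \<circ> \<pi>) x))"
proof -
  interpret \<phi>: order_isomorphism \<phi> using assms(7) by (rule lattice_iso_order_isomorphism)
  have "card {y\<in>- S. twins y x} = card {y\<in>\<phi> -` (- S'). twins y x}" for x
    using card_removed_twins_iso[OF assms(1-6) \<phi>.order_isomorphism_axioms, of x] by simp
  then obtain \<pi> where \<pi>: "bij \<pi>" "\<And>x. twins (\<pi> x) x" "\<pi> ` (- S) = \<phi> -` (- S')"
    by (rule ex_perm_within_classes[OF equivp_twins]) blast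
  interpret \<pi>: order_isomorphism \<pi> using \<pi>(1,2) by (rule twins_perm_order_isomorphism)
  interpret \<phi>\<pi>: order_isomorphism "\<phi> \<circ> \<pi>"
    by (rule order_isomorphism_comp) unfold_locales
  have "\<pi> ` S = \<phi> -` S'" using bij_image_Compl_eq[OF \<pi>(1), of "- S"] \<pi>(3) by (simp add: vimage_Compl)
  then have image: "(\<phi> \<circ> \<pi>) ` S = S'"
    unfolding image_comp[symmetric] using \<phi>.surj by (simp add: surj_image_vimage_eq)
  have "\<forall>x. reducible_in UNIV x \<longrightarrow> \<pi> x = x" using twins_eq_if_reducible[OF \<pi>(2)] by blast
  moreover have "lattice_iso_on (\<phi> \<circ> \<pi>) S S'" using \<phi>\<pi>.lattice_iso_on_image[of S] image by simp
  moreover have "\<forall>x\<in>S. nu S x = nu S' ((\<phi> \<circ> \<pi>) x)" using \<phi>\<pi>.nu_image[of S] image by simp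
  ultimately show ?thesis using \<pi>.lattice_iso by blast
qed

section \<open>Glued sum indecomposability\<close>

lemma incomparable_to_square_middle:
  fixes x :: "'a::{finite,lattice}"
  assumes "unique_covers r a b" "covering_square a c1 c2 b" "\<not> x \<le> r" "\<not> r \<le> x"
  shows "\<exists>c\<in>{c1, c2}. \<not> x \<le> c \<and> \<not> c \<le> x"
proof (rule ccontr)
  assume "\<not> ?thesis"
  then consider "x \<le> c1" "x \<le> c2" | "c1 \<le> x" "c2 \<le> x" | "x \<le> c1" "c2 \<le> x" | "c1 \<le> x" "x \<le> c2"
    by blast
  moreover have "a \<le> r" "r \<le> b"
    using unique_covers_covers[OF assms(1)] by (auto dest: covers_imp_less)
  moreover have "\<not> c1 \<le> c2" "\<not> c2 \<le> c1"
    using assms(2) upper_covers_incomparable unfolding covering_square_def by metis+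
  ultimately show False
  proof cases
    case 1
    then have "x \<le> a" using covering_square_inf[OF assms(2)] by (metis le_inf_iff)
    then show False using assms(3) \<open>a \<le> r\<close> by (metis order.trans)
  next
    case 2
    then have "b \<le> x" using covering_square_sup[OF assms(2)] by (metis le_sup_iff)
    then show False using assms(4) \<open>r \<le> b\<close> by (metis order.trans)
  qed (metis order.trans)+
qed

lemma glued_sum_indecomposable_restrict:
  fixes S :: "'a::{finite,lattice} set"
  assumes "slimming_invariant S" "glued_sum_indecomposable_in (UNIV :: 'a set)"
  shows "glued_sum_indecomposable_in S"
  unfolding glued_sum_indecomposable_in_def
proof (intro conjI ballI impI)
  show "\<not> (\<forall>x\<in>S. \<forall>y\<in>S. x \<le> y \<or> y \<le> x)"
  proof (cases "S = UNIV")
    case False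
    then obtain r where "r \<notin> S" by blast
    with assms(1) obtain a b c1 c2 where "unique_covers r a b" "covering_square a c1 c2 b" "{a, b, c1, c2} \<subseteq> S"
      by (rule slimming_invariant_removedE)
    then have "c1 \<in> S" "c2 \<in> S" "\<not> c1 \<le> c2" "\<not> c2 \<le> c1"
      using upper_covers_incomparable[of a c1 c2] upper_covers_incomparable[of a c2 c1]
      by (auto simp: covering_square_def)
    then show ?thesis by blast
  qed (use assms(2) in \<open>simp add: glued_sum_indecomposable_in_def\<close>)
next
  fix x assume "x \<in> S" "(\<exists>y\<in>S. y < x) \<and> (\<exists>y\<in>S. x < y)"
  then obtain y where y: "\<not> x \<le> y" "\<not> y \<le> x"
    using assms(2) unfolding glued_sum_indecomposable_in_def by blast
  show "\<exists>y\<in>S. \<not> x \<le> y \<and> \<not> y \<le> x"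
  proof (cases "y \<in> S")
    case False
    with assms(1) obtain a b c1 c2 where "unique_covers y a b" "covering_square a c1 c2 b" "{a, b, c1, c2} \<subseteq> S"
      by (rule slimming_invariant_removedE)
    then show ?thesis using incomparable_to_square_middle[of y a b c1 c2 x] y by auto
  qed (use y in blast)
qed

lemma glued_sum_indecomposable_extend:
  fixes S :: "'a::{finite,lattice} set"
  assumes "slimming_invariant S" "glued_sum_indecomposable_in S"
  shows "glued_sum_indecomposable_in (UNIV :: 'a set)"
  unfolding glued_sum_indecomposable_in_def
proof (intro conjI ballI impI)
  obtain x y :: 'a where "\<not> x \<le> y" "\<not> y \<le> x"
    using assms(2) unfolding glued_sum_indecomposable_in_def by blast
  then show "\<not> (\<forall>x\<in>UNIV :: 'a set. \<forall>y\<in>UNIV. x \<le> y \<or> y \<le> x)" by blast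
next
  fix x :: 'a
  assume "(\<exists>y\<in>UNIV. y < x) \<and> (\<exists>y\<in>UNIV. x < y)"
  then obtain y0 y1 :: 'a where "y0 < x" "x < y1" by blast
  show "\<exists>y\<in>UNIV. \<not> x \<le> y \<and> \<not> y \<le> x"
  proof (cases "x \<in> S")
    case True
    have "\<exists>y\<in>S. y < x"
    proof (cases "y0 \<in> S")
      case False
      with assms(1) obtain a b c1 c2 where "unique_covers y0 a b" "covering_square a c1 c2 b" "{a, b, c1, c2} \<subseteq> S"
        by (rule slimming_invariant_removedE)
      then have "a \<in> S" "a < y0" using unique_covers_covers[of y0 a b] covers_imp_less by auto
      then show ?thesis using order.strict_trans[OF _ \<open>y0 < x\<close>] by blast
    qed (use \<open>y0 < x\<close> in blast)
    moreover have "\<exists>y\<in>S. x < y"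
    proof (cases "y1 \<in> S")
      case False
      with assms(1) obtain a b c1 c2 where "unique_covers y1 a b" "covering_square a c1 c2 b" "{a, b, c1, c2} \<subseteq> S"
        by (rule slimming_invariant_removedE)
      then have "b \<in> S" "y1 < b" using unique_covers_covers[of y1 a b] covers_imp_less by auto
      then show ?thesis using order.strict_trans[OF \<open>x < y1\<close>] by blast
    qed (use \<open>x < y1\<close> in blast)
    ultimately show ?thesis using assms(2) True unfolding glued_sum_indecomposable_in_def by blast
  next
    case False
    with assms(1) obtain a b c1 c2 where x: "unique_covers x a b" "covering_square a c1 c2 b" "{a, b, c1, c2} \<subseteq> S"
      by (rule slimming_invariant_removedE)
    then have "c1 \<noteq> x" "covers a c1" "covers c1 b" using False by (auto simp: covering_square_def)
    moreover from this have "\<not> c1 \<le> a" "\<not> b \<le> c1"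
      using covers_imp_less by (auto simp: less_le_not_le)
    ultimately have "\<not> c1 \<le> x" "\<not> x \<le> c1"
      using unique_covers_le_iff[OF x(1)] unique_covers_ge_iff[OF x(1)] by blast+
    then show ?thesis by blast
  qed
qed

theorem mainTheorem8:
  fixes p1 :: "'a::{finite,lattice} \<Rightarrow> real \<times> real"
    and p2 :: "'b::{finite,lattice} \<Rightarrow> real \<times> real"
    and S1 :: "'a set" and S2 :: "'b set"
  assumes "semimodular TYPE('a)" and "semimodular TYPE('b)"
    and "planar_diagram p1" and "planar_diagram p2"
    and "full_slimming p1 S1" and "full_slimming p2 S2"
  shows "(glued_sum_indecomposable_in (UNIV :: 'a set) \<longleftrightarrow> glued_sum_indecomposable_in S1)
    \<and> (\<forall>\<phi> :: 'a \<Rightarrow> 'b. lattice_iso \<phi> \<longrightarrow>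
          (\<exists>\<pi> :: 'a \<Rightarrow> 'a. lattice_iso \<pi> \<and> (\<forall>x. reducible_in UNIV x \<longrightarrow> \<pi> x = x) \<and>
             lattice_iso_on (\<phi> \<circ> \<pi>) S1 S2 \<and> (\<forall>x\<in>S1. nu S1 x = nu S2 ((\<phi> \<circ> \<pi>) x))))
    \<and> (\<forall>(q :: 'a \<Rightarrow> real \<times> real) (q' :: 'a \<Rightarrow> real \<times> real) T T'. planar_diagram q \<and> planar_diagram q' \<and>
          full_slimming q T \<and> full_slimming q' T' \<longrightarrow> (\<exists>\<psi>. lattice_iso_on \<psi> T T'))"
proof (intro conjI allI impI)
  have "slimming_invariant S1" using assms(5) by (rule slimming_invariant_full_slimming)
  then show "glued_sum_indecomposable_in (UNIV :: 'a set) \<longleftrightarrow> glued_sum_indecomposable_in S1"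
    using glued_sum_indecomposable_restrict glued_sum_indecomposable_extend by blast
next
  fix \<phi> :: "'a \<Rightarrow> 'b"
  assume "lattice_iso \<phi>"
  then show "\<exists>\<pi>. lattice_iso \<pi> \<and> (\<forall>x. reducible_in UNIV x \<longrightarrow> \<pi> x = x) \<and>
      lattice_iso_on (\<phi> \<circ> \<pi>) S1 S2 \<and> (\<forall>x\<in>S1. nu S1 x = nu S2 ((\<phi> \<circ> \<pi>) x))"
    by (rule full_slimming_iso[OF assms])
next
  fix q q' :: "'a \<Rightarrow> real \<times> real" and T T' :: "'a set"
  assume "planar_diagram q \<and> planar_diagram q' \<and> full_slimming q T \<and> full_slimming q' T'"
  moreover have "lattice_iso (id :: 'a \<Rightarrow> 'a)" by (simp add: lattice_iso_def)
  ultimately obtain \<pi> :: "'a \<Rightarrow> 'a" where "lattice_iso_on (id \<circ> \<pi>) T T'"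
    using full_slimming_iso[OF assms(1,1), of q q' T T' id] by blast
  then show "\<exists>\<psi>. lattice_iso_on \<psi> T T'" by blast
qed

end
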